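(* (i) Let $(H,\mathcal{R})$ be a quasitriangular Hopf algebra over a field $k$ with $H\neq k$. Then the functor ${}_H\mathcal{M}\to{}^H_H\mathcal{M}$ sending a left $H$-module $(V,\triangleright)$ to the crossed module $(V,\triangleright,\beta)$ with $\beta(v)=\mathcal{R}^{(2)}\otimes\mathcal{R}^{(1)}\triangleright v$, and acting as the identity on morphisms, is not an isomorphism of categories. (ii) Let $(H,\mathcal{R})$ be a dual quasitriangular Hopf algebra over $k$ with $H\neq k$. Then the functor ${}^H\mathcal{M}\to{}^H_H\mathcal{M}$ sending a left $H$-comodule $(V,\beta)$, $\beta(v)=v^{\bar{(1)}}\otimes v^{\bar{(2)}}$, to $(V,\beta,\triangleright)$ with $h\triangleright v=\mathcal{R}(v^{\bar{(1)}}\otimes h)v^{\bar{(2)}}$, and acting as the identity on morphisms, is not an isomorphism of categories.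
   Context: A quasitriangular Hopf algebra is a Hopf algebra $H$ with invertible $\mathcal{R}=\mathcal{R}^{(1)}\otimes\mathcal{R}^{(2)}\in H\otimes H$ (summation understood) with $(\Delta\otimes\mathrm{id})\mathcal{R}=\mathcal{R}_{13}\mathcal{R}_{23}$, $(\mathrm{id}\otimes\Delta)\mathcal{R}=\mathcal{R}_{13}\mathcal{R}_{12}$, $\Delta^{op}=\mathcal{R}(\Delta\,\cdot)\mathcal{R}^{-1}$. A dual quasitriangular Hopf algebra is a Hopf algebra with a convolution-invertible $\mathcal{R}:H\otimes H\to k$ satisfying $\mathcal{R}(hg\otimes f)=\mathcal{R}(h\otimes f_{(1)})\mathcal{R}(g\otimes f_{(2)})$, $\mathcal{R}(h\otimes gf)=\mathcal{R}(h_{(1)}\otimes f)\mathcal{R}(h_{(2)}\otimes g)$, $g_{(1)}h_{(1)}\mathcal{R}(h_{(2)}\otimes g_{(2)})=\mathcal{R}(h_{(1)}\otimes g_{(1)})h_{(2)}g_{(2)}$. ${}_H\mathcal{M}$ and ${}^H\mathcal{M}$ denote the categories of left $H$-modules and left $H$-comodules. ${}^H_H\mathcal{M}$ is the category of left crossed modules: vector spaces $V$ with a left $H$-action $\triangleright$ and a left $H$-coaction $v\mapsto v^{\bar{(1)}}\otimes v^{\bar{(2)}}\in H\otimes V$ satisfying $h_{(1)}v^{\bar{(1)}}\otimes h_{(2)}\triangleright v^{\bar{(2)}}=(h_{(1)}\triangleright v)^{\bar{(1)}}h_{(2)}\otimes(h_{(1)}\triangleright v)^{\bar{(2)}}$,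 with morphisms the linear maps intertwining both the action and the coaction. *)

theory Defs
  imports Main "HOL.Vector_Spaces"
begin

text \<open>An element of A \<otimes> B is represented by a finite list of pairs (a formal sum of
pure tensors).  Two representatives denote the same tensor iff they agree under
every f \<otimes> g with f, g linear functionals (over a field linear functionals separate
the points of a tensor product).\<close>

definition teq2 ::
  "('k::field \<Rightarrow> 'a::ab_group_add \<Rightarrow> 'a) \<Rightarrow> ('k \<Rightarrow> 'b::ab_group_add \<Rightarrow> 'b) \<Rightarrow>
   ('a \<times> 'b) list \<Rightarrow> ('a \<times> 'b) list \<Rightarrow> bool" where
  "teq2 sa sb xs ys \<longleftrightarrow>
     (\<forall>f g. Vector_Spaces.linear sa (*) f \<longrightarrow> Vector_Spaces.linear sb (*) g \<longrightarrow>
        sum_list (map (\<lambda>(a, b). f a * g b) xs) = sum_list (map (\<lambda>(a, b). f a * g b) ys))"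

definition teq3 ::
  "('k::field \<Rightarrow> 'a::ab_group_add \<Rightarrow> 'a) \<Rightarrow> ('k \<Rightarrow> 'b::ab_group_add \<Rightarrow> 'b) \<Rightarrow>
   ('k \<Rightarrow> 'c::ab_group_add \<Rightarrow> 'c) \<Rightarrow>
   ('a \<times> 'b \<times> 'c) list \<Rightarrow> ('a \<times> 'b \<times> 'c) list \<Rightarrow> bool" where
  "teq3 sa sb sc xs ys \<longleftrightarrow>
     (\<forall>f g h. Vector_Spaces.linear sa (*) f \<longrightarrow> Vector_Spaces.linear sb (*) g \<longrightarrow> Vector_Spaces.linear sc (*) h \<longrightarrow>
        sum_list (map (\<lambda>(a, b, c). f a * g b * h c) xs) =
        sum_list (map (\<lambda>(a, b, c). f a * g b * h c) ys))"

definition hopf_algebra ::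
  "('k::field \<Rightarrow> 'h::ab_group_add \<Rightarrow> 'h) \<Rightarrow> ('h \<Rightarrow> 'h \<Rightarrow> 'h) \<Rightarrow> 'h \<Rightarrow>
   ('h \<Rightarrow> ('h \<times> 'h) list) \<Rightarrow> ('h \<Rightarrow> 'k) \<Rightarrow> ('h \<Rightarrow> 'h) \<Rightarrow> bool" where
  "hopf_algebra sc mult one Delta eps S \<longleftrightarrow>
     vector_space sc
   \<comment> \<open>associative unital algebra\<close>
   \<and> (\<forall>a b c. mult (mult a b) c = mult a (mult b c))
   \<and> (\<forall>a. mult one a = a \<and> mult a one = a)
   \<and> (\<forall>a b c. mult (a + b) c = mult a c + mult b c \<and> mult a (b + c) = mult a b + mult a c)
   \<and> (\<forall>r a b. mult (sc r a) b = sc r (mult a b) \<and> mult a (sc r b) = sc r (mult a b))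
   \<comment> \<open>coassociative counital coalgebra\<close>
   \<and> (\<forall>a b. teq2 sc sc (Delta (a + b)) (Delta a @ Delta b))
   \<and> (\<forall>r a. teq2 sc sc (Delta (sc r a)) [(sc r x, y). (x, y) \<leftarrow> Delta a])
   \<and> (\<forall>h. teq3 sc sc sc [(x1, x2, y). (x, y) \<leftarrow> Delta h, (x1, x2) \<leftarrow> Delta x]
                         [(x, y1, y2). (x, y) \<leftarrow> Delta h, (y1, y2) \<leftarrow> Delta y])
   \<and> Vector_Spaces.linear sc (*) eps
   \<and> (\<forall>h. sum_list [sc (eps x) y. (x, y) \<leftarrow> Delta h] = h
        \<and> sum_list [sc (eps y) x. (x, y) \<leftarrow> Delta h] = h)
   \<comment> \<open>bialgebra\<close>
   \<and> (\<forall>a b. teq2 sc sc (Delta (mult a b))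
              [(mult a1 b1, mult a2 b2). (a1, a2) \<leftarrow> Delta a, (b1, b2) \<leftarrow> Delta b])
   \<and> teq2 sc sc (Delta one) [(one, one)]
   \<and> (\<forall>a b. eps (mult a b) = eps a * eps b)
   \<and> eps one = 1
   \<comment> \<open>antipode\<close>
   \<and> Vector_Spaces.linear sc sc S
   \<and> (\<forall>h. sum_list [mult (S x) y. (x, y) \<leftarrow> Delta h] = sc (eps h) one
        \<and> sum_list [mult x (S y). (x, y) \<leftarrow> Delta h] = sc (eps h) one)"

text \<open>H \<noteq> k: the unit map k \<rightarrow> H is not surjective.\<close>
definition hopf_nontrivial :: "('k::field \<Rightarrow> 'h::ab_group_add \<Rightarrow> 'h) \<Rightarrow> 'h \<Rightarrow> bool" where
  "hopf_nontrivial sc one \<longleftrightarrow> (\<exists>h. \<forall>c. h \<noteq> sc c one)"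

definition quasitriangular ::
  "('k::field \<Rightarrow> 'h::ab_group_add \<Rightarrow> 'h) \<Rightarrow> ('h \<Rightarrow> 'h \<Rightarrow> 'h) \<Rightarrow> 'h \<Rightarrow>
   ('h \<Rightarrow> ('h \<times> 'h) list) \<Rightarrow> ('h \<Rightarrow> 'k) \<Rightarrow> ('h \<Rightarrow> 'h) \<Rightarrow> ('h \<times> 'h) list \<Rightarrow> bool" where
  "quasitriangular sc mult one Delta eps S R \<longleftrightarrow>
     hopf_algebra sc mult one Delta eps S
   \<and> (\<exists>Rinv.
        teq2 sc sc [(mult a c, mult b d). (a, b) \<leftarrow> R, (c, d) \<leftarrow> Rinv] [(one, one)]
      \<and> teq2 sc sc [(mult c a, mult d b). (c, d) \<leftarrow> Rinv, (a, b) \<leftarrow> R] [(one, one)]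
      \<and> (\<forall>h. teq2 sc sc [(y, x). (x, y) \<leftarrow> Delta h]
               [(mult (mult a x) c, mult (mult b y) d).
                  (a, b) \<leftarrow> R, (x, y) \<leftarrow> Delta h, (c, d) \<leftarrow> Rinv]))
   \<and> teq3 sc sc sc [(x1, x2, y). (x, y) \<leftarrow> R, (x1, x2) \<leftarrow> Delta x]
                   [(a, c, mult b d). (a, b) \<leftarrow> R, (c, d) \<leftarrow> R]
   \<and> teq3 sc sc sc [(x, y1, y2). (x, y) \<leftarrow> R, (y1, y2) \<leftarrow> Delta y]
                   [(mult a c, d, b). (a, b) \<leftarrow> R, (c, d) \<leftarrow> R]"

definition dual_quasitriangular ::
  "('k::field \<Rightarrow> 'h::ab_group_add \<Rightarrow> 'h) \<Rightarrow> ('h \<Rightarrow> 'h \<Rightarrow> 'h) \<Rightarrow> 'h \<Rightarrow>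
   ('h \<Rightarrow> ('h \<times> 'h) list) \<Rightarrow> ('h \<Rightarrow> 'k) \<Rightarrow> ('h \<Rightarrow> 'h) \<Rightarrow> ('h \<Rightarrow> 'h \<Rightarrow> 'k) \<Rightarrow> bool" where
  "dual_quasitriangular sc mult one Delta eps S R \<longleftrightarrow>
     hopf_algebra sc mult one Delta eps S
   \<and> (\<forall>g. Vector_Spaces.linear sc (*) (\<lambda>h. R h g)) \<and> (\<forall>h. Vector_Spaces.linear sc (*) (R h))
   \<and> (\<exists>Rinv. (\<forall>g. Vector_Spaces.linear sc (*) (\<lambda>h. Rinv h g)) \<and> (\<forall>h. Vector_Spaces.linear sc (*) (Rinv h))
        \<and> (\<forall>h g. sum_list [R h1 g1 * Rinv h2 g2. (h1, h2) \<leftarrow> Delta h, (g1, g2) \<leftarrow> Delta g]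
                  = eps h * eps g
               \<and> sum_list [Rinv h1 g1 * R h2 g2. (h1, h2) \<leftarrow> Delta h, (g1, g2) \<leftarrow> Delta g]
                  = eps h * eps g))
   \<and> (\<forall>h g f. R (mult h g) f = sum_list [R h f1 * R g f2. (f1, f2) \<leftarrow> Delta f])
   \<and> (\<forall>h g f. R h (mult g f) = sum_list [R h1 f * R h2 g. (h1, h2) \<leftarrow> Delta h])
   \<and> (\<forall>h g. sum_list [sc (R h2 g2) (mult g1 h1). (g1, g2) \<leftarrow> Delta g, (h1, h2) \<leftarrow> Delta h]
          = sum_list [sc (R h1 g1) (mult h2 g2). (h1, h2) \<leftarrow> Delta h, (g1, g2) \<leftarrow> Delta g])"

definition left_module ::
  "('k::field \<Rightarrow> 'h::ab_group_add \<Rightarrow> 'h) \<Rightarrow> ('h \<Rightarrow> 'h \<Rightarrow> 'h) \<Rightarrow> 'h \<Rightarrow>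
   ('k \<Rightarrow> 'v::ab_group_add \<Rightarrow> 'v) \<Rightarrow> ('h \<Rightarrow> 'v \<Rightarrow> 'v) \<Rightarrow> bool" where
  "left_module sc mult one sv act \<longleftrightarrow>
     vector_space sv
   \<and> (\<forall>h v w. act h (v + w) = act h v + act h w)
   \<and> (\<forall>h g v. act (h + g) v = act h v + act g v)
   \<and> (\<forall>r h v. act (sc r h) v = sv r (act h v) \<and> act h (sv r v) = sv r (act h v))
   \<and> (\<forall>v. act one v = v)
   \<and> (\<forall>g h v. act (mult g h) v = act g (act h v))"

definition left_comodule ::
  "('k::field \<Rightarrow> 'h::ab_group_add \<Rightarrow> 'h) \<Rightarrow> ('h \<Rightarrow> ('h \<times> 'h) list) \<Rightarrow> ('h \<Rightarrow> 'k) \<Rightarrow>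
   ('k \<Rightarrow> 'v::ab_group_add \<Rightarrow> 'v) \<Rightarrow> ('v \<Rightarrow> ('h \<times> 'v) list) \<Rightarrow> bool" where
  "left_comodule sc Delta eps sv coact \<longleftrightarrow>
     vector_space sv
   \<and> (\<forall>v w. teq2 sc sv (coact (v + w)) (coact v @ coact w))
   \<and> (\<forall>r v. teq2 sc sv (coact (sv r v)) [(x, sv r w). (x, w) \<leftarrow> coact v])
   \<and> (\<forall>v. teq3 sc sc sv [(h1, h2, w). (h, w) \<leftarrow> coact v, (h1, h2) \<leftarrow> Delta h]
                         [(h, h', w'). (h, w) \<leftarrow> coact v, (h', w') \<leftarrow> coact w])
   \<and> (\<forall>v. sum_list [sv (eps h) w. (h, w) \<leftarrow> coact v] = v)"

definition crossed_module ::
  "('k::field \<Rightarrow> 'h::ab_group_add \<Rightarrow> 'h) \<Rightarrow> ('h \<Rightarrow> 'h \<Rightarrow> 'h) \<Rightarrow> 'h \<Rightarrow>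
   ('h \<Rightarrow> ('h \<times> 'h) list) \<Rightarrow> ('h \<Rightarrow> 'k) \<Rightarrow>
   ('k \<Rightarrow> 'v::ab_group_add \<Rightarrow> 'v) \<Rightarrow> ('h \<Rightarrow> 'v \<Rightarrow> 'v) \<Rightarrow> ('v \<Rightarrow> ('h \<times> 'v) list) \<Rightarrow> bool" where
  "crossed_module sc mult one Delta eps sv act coact \<longleftrightarrow>
     left_module sc mult one sv act
   \<and> left_comodule sc Delta eps sv coact
   \<and> (\<forall>h v. teq2 sc sv
        [(mult h1 x, act h2 y). (h1, h2) \<leftarrow> Delta h, (x, y) \<leftarrow> coact v]
        [(mult z h2, w). (h1, h2) \<leftarrow> Delta h, (z, w) \<leftarrow> coact (act h1 v)])"

definition module_hom ::
  "('k::field \<Rightarrow> 'v::ab_group_add \<Rightarrow> 'v) \<Rightarrow> ('h \<Rightarrow> 'v \<Rightarrow> 'v) \<Rightarrow> ('h \<Rightarrow> 'v \<Rightarrow> 'v) \<Rightarrow>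
   ('v \<Rightarrow> 'v) set" where
  "module_hom sv act act' = {f. Vector_Spaces.linear sv sv f \<and> (\<forall>h v. f (act h v) = act' h (f v))}"

definition comodule_hom ::
  "('k::field \<Rightarrow> 'h::ab_group_add \<Rightarrow> 'h) \<Rightarrow> ('k \<Rightarrow> 'v::ab_group_add \<Rightarrow> 'v) \<Rightarrow>
   ('v \<Rightarrow> ('h \<times> 'v) list) \<Rightarrow> ('v \<Rightarrow> ('h \<times> 'v) list) \<Rightarrow> ('v \<Rightarrow> 'v) set" where
  "comodule_hom sc sv coact coact' =
     {f. Vector_Spaces.linear sv sv f \<and> (\<forall>v. teq2 sc sv [(h, f w). (h, w) \<leftarrow> coact v] (coact' (f v)))}"

definition crossed_hom ::
  "('k::field \<Rightarrow> 'h::ab_group_add \<Rightarrow> 'h) \<Rightarrow> ('k \<Rightarrow> 'v::ab_group_add \<Rightarrow> 'v) \<Rightarrow>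
   ('h \<Rightarrow> 'v \<Rightarrow> 'v) \<times> ('v \<Rightarrow> ('h \<times> 'v) list) \<Rightarrow>
   ('h \<Rightarrow> 'v \<Rightarrow> 'v) \<times> ('v \<Rightarrow> ('h \<times> 'v) list) \<Rightarrow> ('v \<Rightarrow> 'v) set" where
  "crossed_hom sc sv X Y = module_hom sv (fst X) (fst Y) \<inter> comodule_hom sc sv (snd X) (snd Y)"

text \<open>Objects of the source (resp. target) category are given by a predicate ObA (ObB)
on representations, with eqA (eqB) saying when two representations denote the same
object; morphisms are maps V \<rightarrow> V given by HomA, HomB.  A functor F that is the identity
on morphisms is an isomorphism of categories iff it is bijective on objects and
on each hom-set.\<close>

definition id_on_morphisms_functor_iso ::
  "('a \<Rightarrow> bool) \<Rightarrow> ('a \<Rightarrow> 'a \<Rightarrow> bool) \<Rightarrow> ('a \<Rightarrow> 'a \<Rightarrow> ('v \<Rightarrow> 'v) set) \<Rightarrow>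
   ('b \<Rightarrow> bool) \<Rightarrow> ('b \<Rightarrow> 'b \<Rightarrow> bool) \<Rightarrow> ('b \<Rightarrow> 'b \<Rightarrow> ('v \<Rightarrow> 'v) set) \<Rightarrow>
   ('a \<Rightarrow> 'b) \<Rightarrow> bool" where
  "id_on_morphisms_functor_iso ObA eqA HomA ObB eqB HomB F \<longleftrightarrow>
     (\<forall>x y. ObA x \<longrightarrow> ObA y \<longrightarrow> eqB (F x) (F y) \<longrightarrow> eqA x y)
   \<and> (\<forall>z. ObB z \<longrightarrow> (\<exists>x. ObA x \<and> eqB (F x) z))
   \<and> (\<forall>x y. ObA x \<longrightarrow> ObA y \<longrightarrow> HomB (F x) (F y) = HomA x y)"

definition R_coaction :: "('h \<times> 'h) list \<Rightarrow> ('h \<Rightarrow> 'v \<Rightarrow> 'v) \<Rightarrow> 'v \<Rightarrow> ('h \<times> 'v) list" where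
  "R_coaction R act v = [(b, act a v). (a, b) \<leftarrow> R]"

definition R_action ::
  "('k \<Rightarrow> 'v::ab_group_add \<Rightarrow> 'v) \<Rightarrow> ('h \<Rightarrow> 'h \<Rightarrow> 'k) \<Rightarrow> ('v \<Rightarrow> ('h \<times> 'v) list) \<Rightarrow> 'h \<Rightarrow> 'v \<Rightarrow> 'v" where
  "R_action sv R coact h v = sum_list [sv (R x h) w. (x, w) \<leftarrow> coact v]"

definition crossed_obj_eq ::
  "('k::field \<Rightarrow> 'h::ab_group_add \<Rightarrow> 'h) \<Rightarrow> ('k \<Rightarrow> 'v::ab_group_add \<Rightarrow> 'v) \<Rightarrow>
   ('h \<Rightarrow> 'v \<Rightarrow> 'v) \<times> ('v \<Rightarrow> ('h \<times> 'v) list) \<Rightarrow>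
   ('h \<Rightarrow> 'v \<Rightarrow> 'v) \<times> ('v \<Rightarrow> ('h \<times> 'v) list) \<Rightarrow> bool" where
  "crossed_obj_eq sc sv X Y \<longleftrightarrow> fst X = fst Y \<and> (\<forall>v. teq2 sc sv (snd X v) (snd Y v))"

definition coact_eq ::
  "('k::field \<Rightarrow> 'h::ab_group_add \<Rightarrow> 'h) \<Rightarrow> ('k \<Rightarrow> 'v::ab_group_add \<Rightarrow> 'v) \<Rightarrow>
   ('v \<Rightarrow> ('h \<times> 'v) list) \<Rightarrow> ('v \<Rightarrow> ('h \<times> 'v) list) \<Rightarrow> bool" where
  "coact_eq sc sv c d \<longleftrightarrow> (\<forall>v. teq2 sc sv (c v) (d v))"

text \<open>Functor (i) restricted to objects with underlying vector space V.\<close>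
definition functor_i_iso ::
  "('k::field \<Rightarrow> 'h::ab_group_add \<Rightarrow> 'h) \<Rightarrow> ('h \<Rightarrow> 'h \<Rightarrow> 'h) \<Rightarrow> 'h \<Rightarrow>
   ('h \<Rightarrow> ('h \<times> 'h) list) \<Rightarrow> ('h \<Rightarrow> 'k) \<Rightarrow> ('h \<times> 'h) list \<Rightarrow>
   ('k \<Rightarrow> 'v::ab_group_add \<Rightarrow> 'v) \<Rightarrow> bool" where
  "functor_i_iso sc mult one Delta eps R sv \<longleftrightarrow>
     id_on_morphisms_functor_iso
       (left_module sc mult one sv) (=) (module_hom sv)
       (\<lambda>X. crossed_module sc mult one Delta eps sv (fst X) (snd X)) (crossed_obj_eq sc sv)
       (crossed_hom sc sv)
       (\<lambda>act. (act, R_coaction R act))"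

text \<open>Functor (ii) restricted to objects with underlying vector space V.\<close>
definition functor_ii_iso ::
  "('k::field \<Rightarrow> 'h::ab_group_add \<Rightarrow> 'h) \<Rightarrow> ('h \<Rightarrow> 'h \<Rightarrow> 'h) \<Rightarrow> 'h \<Rightarrow>
   ('h \<Rightarrow> ('h \<times> 'h) list) \<Rightarrow> ('h \<Rightarrow> 'k) \<Rightarrow> ('h \<Rightarrow> 'h \<Rightarrow> 'k) \<Rightarrow>
   ('k \<Rightarrow> 'v::ab_group_add \<Rightarrow> 'v) \<Rightarrow> bool" where
  "functor_ii_iso sc mult one Delta eps R sv \<longleftrightarrow>
     id_on_morphisms_functor_iso
       (left_comodule sc Delta eps sv) (coact_eq sc sv) (comodule_hom sc sv)
       (\<lambda>X. crossed_module sc mult one Delta eps sv (fst X) (snd X)) (crossed_obj_eq sc sv)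
       (crossed_hom sc sv)
       (\<lambda>coact. (R_action sv R coact, coact))"

end

theory Submission
  imports Defs
begin

text \<open>A functor that is the identity on morphisms can only be an isomorphism if every crossed
  module on V lies in its image, so it suffices to exhibit one that does not.

  (i) Take H with the adjoint action h \<triangleright> x = h1 x S(h2) and the regular coaction \<Delta>. If
  \<Delta>(x) were R2 \<otimes> R1 \<triangleright> x, applying id \<otimes> eps would give
  x = (eps \<otimes> id)(R) eps(x) = eps(x) 1, since eps(h \<triangleright> x) = eps(h) eps(x) and (eps \<otimes> id) R = 1.
  (ii) Dually, take H with left multiplication and the coadjoint coaction x1 S(x3) \<otimes> x2. If
  left multiplication were h \<triangleright> x = R(x1, h) x2, then at x = 1 it would give h = R(1, h) 1 = eps(h) 1.
  Either way H = k. Both structures live on H; they are moved to V, which contains a linear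
  copy of H, by letting H act through eps and coact trivially on a complement.\<close>

section \<open>Linear functionals and tensors\<close>

lemma vector_space_field: "vector_space ((*) :: 'k::field \<Rightarrow> 'k \<Rightarrow> 'k)"
  by unfold_locales (simp_all add: algebra_simps)

lemmas linear_add = module_hom.add[OF module_hom_linearI]
  and linear_scale = module_hom.scale[OF module_hom_linearI]
  and linear_zero = module_hom.zero[OF module_hom_linearI]
  and linear_sum = module_hom.sum[OF module_hom_linearI]

lemma linear_sum_list:
  "Vector_Spaces.linear s1 s2 f \<Longrightarrow> f (\<Sum>x\<leftarrow>xs. g x) = (\<Sum>x\<leftarrow>xs. f (g x))"
  by (induction xs) (simp_all add: linear_zero linear_add)

lemma linear_functionalI:
  "vector_space s \<Longrightarrow> (\<And>x y. f (x + y) = f x + f y) \<Longrightarrow> (\<And>c x. f (s c x) = c * f (x :: 'a)) \<Longrightarrow>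
   Vector_Spaces.linear s (*) (f :: 'a::ab_group_add \<Rightarrow> 'k::field)"
  by (simp add: linear_iff vector_space_field)

lemma sum_list_sum_swap: "(\<Sum>x\<leftarrow>xs. \<Sum>e\<in>E. g e x) = (\<Sum>e\<in>E. \<Sum>x\<leftarrow>xs. g e x)"
  by (induction xs) (simp_all add: sum.distrib)

lemma sum_list_swap:
  "(\<Sum>a\<leftarrow>xs. \<Sum>b\<leftarrow>ys. f a b) = (\<Sum>b\<leftarrow>ys. \<Sum>a\<leftarrow>xs. f a b :: 'c::comm_monoid_add)"
  by (induction xs) (simp_all add: sum_list_addf)

lemma sum_list_concat_map: "sum_list (concat xss) = (\<Sum>xs\<leftarrow>xss. sum_list xs)"
  by (induction xss) simp_all

context vector_space
begin

lemma finite_coordinates: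
  assumes "finite A"
  obtains c :: "'b \<Rightarrow> 'b \<Rightarrow> 'a" and E where "\<And>e. Vector_Spaces.linear scale (*) (c e)" "finite E"
    "\<And>x. x \<in> A \<Longrightarrow> x = (\<Sum>e\<in>E. scale (c e x) e)"
proof -
  define B where "B = extend_basis {}"
  have B: "independent B" "span B = UNIV"
    unfolding B_def by (simp_all add: independent_extend_basis independent_empty)
  define E where "E = (\<Union>x\<in>A. {b. representation B x b \<noteq> 0})"
  have E: "finite E"
    unfolding E_def using assms finite_representation by blast
  have "x = (\<Sum>e\<in>E. scale (representation B x e) e)" if "x \<in> A" for x
  proof -
    have "(\<Sum>e\<in>E. scale (representation B x e) e)
        = (\<Sum>b | representation B x b \<noteq> 0. scale (representation B x b) b)"
      using E that by (intro sum.mono_neutral_right) (auto simp: E_def)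
    also have "\<dots> = x"
      using B by (simp add: sum_nonzero_representation_eq)
    finally show ?thesis by simp
  qed
  then show ?thesis
    using linear_representation[OF B] E by (intro that[of "\<lambda>e x. representation B x e" E])
qed

lemma functional_coordinates:
  assumes "Vector_Spaces.linear scale (*) \<phi>" and "x = (\<Sum>e\<in>E. scale (c e x) e)"
  shows "\<phi> x = (\<Sum>e\<in>E. c e x * \<phi> e)"
  by (subst assms(2)) (simp add: linear_sum[OF assms(1)] linear_scale[OF assms(1)])

lemma linear_functionals_separate:
  assumes "\<And>\<phi>. Vector_Spaces.linear scale (*) \<phi> \<Longrightarrow> \<phi> x = \<phi> y"
  shows "x = y"
proof -
  obtain c E where c: "\<And>e. Vector_Spaces.linear scale (*) (c e)"
    and E: "\<And>z. z \<in> {x, y} \<Longrightarrow> z = (\<Sum>e\<in>E. scale (c e z) e)"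
    by (rule finite_coordinates[of "{x, y}"]) auto
  have "x = (\<Sum>e\<in>E. scale (c e x) e)" by (rule E) simp
  also have "\<dots> = (\<Sum>e\<in>E. scale (c e y) e)" using assms[OF c] by simp
  also have "\<dots> = y" by (rule E[symmetric]) simp
  finally show ?thesis .
qed

end

text \<open>Over a field, equality of tensors tested on products of linear functionals already gives
  equality of the contractions with arbitrary multilinear forms: expand the first factor in a basis.\<close>

lemma teq2_bilinear:
  assumes "vector_space sa" and "teq2 sa sb xs ys"
    and lin1: "\<And>b. Vector_Spaces.linear sa (*) (\<lambda>a. F a b)"
    and lin2: "\<And>a. Vector_Spaces.linear sb (*) (F a)"
  shows "(\<Sum>(a, b)\<leftarrow>xs. F a b) = (\<Sum>(a, b)\<leftarrow>ys. F a b)"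
proof -
  interpret vector_space sa by fact
  obtain c E where c: "\<And>e. Vector_Spaces.linear sa (*) (c e)"
    and E: "\<And>a. a \<in> fst ` set (xs @ ys) \<Longrightarrow> a = (\<Sum>e\<in>E. sa (c e a) e)"
    by (rule finite_coordinates[of "fst ` set (xs @ ys)"]) auto
  have expand: "(\<Sum>(a, b)\<leftarrow>zs. F a b) = (\<Sum>e\<in>E. \<Sum>(a, b)\<leftarrow>zs. c e a * F e b)"
    if "set zs \<subseteq> set (xs @ ys)" for zs
  proof -
    have "F a b = (\<Sum>e\<in>E. c e a * F e b)" if "(a, b) \<in> set zs" for a b
    proof (rule functional_coordinates[OF lin1 E])
      show "a \<in> fst ` set (xs @ ys)" using that \<open>set zs \<subseteq> _\<close> by force
    qed
    then have "(\<Sum>(a, b)\<leftarrow>zs. F a b) = (\<Sum>(a, b)\<leftarrow>zs. \<Sum>e\<in>E. c e a * F e b)"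
      by (intro arg_cong[where f = sum_list] map_cong) auto
    then show ?thesis
      by (simp add: sum_list_sum_swap[symmetric] split_def)
  qed
  show ?thesis
    using assms(2) c lin2 by (simp add: expand teq2_def)
qed

lemma teq3_trilinear:
  assumes "vector_space sa" and "teq3 sa sb sc xs ys"
    and lin1: "\<And>b z. Vector_Spaces.linear sa (*) (\<lambda>a. F a b z)"
    and lin2: "\<And>a z. Vector_Spaces.linear sb (*) (\<lambda>b. F a b z)"
    and lin3: "\<And>a b. Vector_Spaces.linear sc (*) (F a b)"
  shows "(\<Sum>(a, b, z)\<leftarrow>xs. F a b z) = (\<Sum>(a, b, z)\<leftarrow>ys. F a b z)"
proof -
  interpret vector_space sa by fact
  obtain c E where c: "\<And>e. Vector_Spaces.linear sa (*) (c e)"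
    and E: "\<And>a. a \<in> fst ` set (xs @ ys) \<Longrightarrow> a = (\<Sum>e\<in>E. sa (c e a) e)"
    by (rule finite_coordinates[of "fst ` set (xs @ ys)"]) auto
  have expand: "(\<Sum>(a, b, z)\<leftarrow>zs. F a b z) = (\<Sum>e\<in>E. \<Sum>(b, z)\<leftarrow>[(sb (c e a) b, z). (a, b, z) \<leftarrow> zs]. F e b z)"
    if "set zs \<subseteq> set (xs @ ys)" for zs
  proof -
    have "F a b z = (\<Sum>e\<in>E. c e a * F e b z)" if "(a, b, z) \<in> set zs" for a b z
    proof (rule functional_coordinates[OF lin1 E])
      show "a \<in> fst ` set (xs @ ys)" using that \<open>set zs \<subseteq> _\<close> by force
    qed
    then have "(\<Sum>(a, b, z)\<leftarrow>zs. F a b z) = (\<Sum>(a, b, z)\<leftarrow>zs. \<Sum>e\<in>E. c e a * F e b z)"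
      by (intro arg_cong[where f = sum_list] map_cong) auto
    then show ?thesis
      by (simp add: sum_list_sum_swap[symmetric] split_def comp_def linear_scale[OF lin2])
  qed
  have contracted: "teq2 sb sc [(sb (c e a) b, z). (a, b, z) \<leftarrow> xs] [(sb (c e a) b, z). (a, b, z) \<leftarrow> ys]"
    for e
    using assms(2) c unfolding teq2_def teq3_def
    by (simp add: split_def comp_def linear_scale mult.assoc)
  have "vector_space sb"
    using lin2 by (simp add: linear_iff)
  have "(\<Sum>(a, b, z)\<leftarrow>xs. F a b z) = (\<Sum>e\<in>E. \<Sum>(b, z)\<leftarrow>[(sb (c e a) b, z). (a, b, z) \<leftarrow> xs]. F e b z)"
    by (rule expand) simp
  also have "\<dots> = (\<Sum>e\<in>E. \<Sum>(b, z)\<leftarrow>[(sb (c e a) b, z). (a, b, z) \<leftarrow> ys]. F e b z)"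
    by (intro sum.cong refl teq2_bilinear[OF \<open>vector_space sb\<close> contracted lin2 lin3])
  also have "\<dots> = (\<Sum>(a, b, z)\<leftarrow>ys. F a b z)"
    by (rule expand[symmetric]) simp
  finally show ?thesis .
qed

section \<open>Sweedler calculus\<close>

locale hopf =
  fixes sc :: "'k::field \<Rightarrow> 'h::ab_group_add \<Rightarrow> 'h" and mult :: "'h \<Rightarrow> 'h \<Rightarrow> 'h" and one :: 'h
    and Delta :: "'h \<Rightarrow> ('h \<times> 'h) list" and eps :: "'h \<Rightarrow> 'k" and S :: "'h \<Rightarrow> 'h"
  assumes hopf_algebra: "hopf_algebra sc mult one Delta eps S"
begin

lemma
  shows H_vector_space: "vector_space sc"
    and mult_assoc: "mult (mult a b) c = mult a (mult b c)"
    and mult_one_left [simp]: "mult one a = a"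
    and mult_one_right [simp]: "mult a one = a"
    and mult_add_left: "mult (a + b) c = mult a c + mult b c"
    and mult_add_right: "mult a (b + c) = mult a b + mult a c"
    and mult_scale_left: "mult (sc r a) b = sc r (mult a b)"
    and mult_scale_right: "mult a (sc r b) = sc r (mult a b)"
    and Delta_add: "teq2 sc sc (Delta (a + b)) (Delta a @ Delta b)"
    and Delta_scale: "teq2 sc sc (Delta (sc r a)) [(sc r x, y). (x, y) \<leftarrow> Delta a]"
    and Delta_coassoc: "teq3 sc sc sc [(x1, x2, y). (x, y) \<leftarrow> Delta h, (x1, x2) \<leftarrow> Delta x]
                                     [(x, y1, y2). (x, y) \<leftarrow> Delta h, (y1, y2) \<leftarrow> Delta y]"
    and eps_linear: "Vector_Spaces.linear sc (*) eps"
    and counit_left: "(\<Sum>(x, y)\<leftarrow>Delta h. sc (eps x) y) = h"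
    and counit_right: "(\<Sum>(x, y)\<leftarrow>Delta h. sc (eps y) x) = h"
    and Delta_mult: "teq2 sc sc (Delta (mult a b))
                       [(mult a1 b1, mult a2 b2). (a1, a2) \<leftarrow> Delta a, (b1, b2) \<leftarrow> Delta b]"
    and Delta_one: "teq2 sc sc (Delta one) [(one, one)]"
    and eps_mult: "eps (mult a b) = eps a * eps b"
    and eps_one [simp]: "eps one = 1"
    and S_linear: "Vector_Spaces.linear sc sc S"
    and antipode_left: "(\<Sum>(x, y)\<leftarrow>Delta h. mult (S x) y) = sc (eps h) one"
    and antipode_right: "(\<Sum>(x, y)\<leftarrow>Delta h. mult x (S y)) = sc (eps h) one"
  using hopf_algebra by (simp_all add: hopf_algebra_def)

abbreviation lin_form :: "('h \<Rightarrow> 'k) \<Rightarrow> bool" where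
  "lin_form f \<equiv> Vector_Spaces.linear sc (*) f"

lemma H_separate: "(\<And>\<phi>. lin_form \<phi> \<Longrightarrow> \<phi> x = \<phi> y) \<Longrightarrow> x = y"
  using vector_space.linear_functionals_separate[OF H_vector_space] by blast

lemma lin_formI: "(\<And>x y. f (x + y) = f x + f y) \<Longrightarrow> (\<And>c x. f (sc c x) = c * f x) \<Longrightarrow> lin_form f"
  by (rule linear_functionalI[OF H_vector_space])

lemma lin_form_cmult_left: "lin_form f \<Longrightarrow> lin_form (\<lambda>x. c * f x)"
  by (rule lin_formI) (simp_all add: linear_add linear_scale algebra_simps)
lemma lin_form_cmult_right: "lin_form f \<Longrightarrow> lin_form (\<lambda>x. f x * c)"
  by (rule lin_formI) (simp_all add: linear_add linear_scale algebra_simps)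
lemma lin_form_comp_mult_right: "lin_form f \<Longrightarrow> lin_form (\<lambda>x. f (mult x c))"
  by (rule lin_formI) (simp_all add: linear_add linear_scale mult_add_left mult_scale_left)
lemma lin_form_comp_mult_left: "lin_form f \<Longrightarrow> lin_form (\<lambda>x. f (mult c x))"
  by (rule lin_formI) (simp_all add: linear_add linear_scale mult_add_right mult_scale_right)
lemma lin_form_comp_S: "lin_form f \<Longrightarrow> lin_form (\<lambda>x. f (S x))"
  by (rule lin_formI) (simp_all add: linear_add linear_scale linear_add[OF S_linear] linear_scale[OF S_linear])

definition sweedler :: "'h \<Rightarrow> ('h \<Rightarrow> 'h \<Rightarrow> 'k) \<Rightarrow> 'k" where
  "sweedler h F = (\<Sum>(a, b)\<leftarrow>Delta h. F a b)"

definition bilinear_form :: "('h \<Rightarrow> 'h \<Rightarrow> 'k) \<Rightarrow> bool" where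
  "bilinear_form F \<longleftrightarrow> (\<forall>b. lin_form (\<lambda>a. F a b)) \<and> (\<forall>a. lin_form (F a))"

definition trilinear_form :: "('h \<Rightarrow> 'h \<Rightarrow> 'h \<Rightarrow> 'k) \<Rightarrow> bool" where
  "trilinear_form F \<longleftrightarrow>
     (\<forall>b c. lin_form (\<lambda>a. F a b c)) \<and> (\<forall>a c. lin_form (\<lambda>b. F a b c)) \<and> (\<forall>a b. lin_form (F a b))"

lemma bilinear_formI: "(\<And>b. lin_form (\<lambda>a. F a b)) \<Longrightarrow> (\<And>a. lin_form (\<lambda>b. F a b)) \<Longrightarrow> bilinear_form F"
  unfolding bilinear_form_def by auto

lemma trilinear_formI:
  "(\<And>b c. lin_form (\<lambda>a. F a b c)) \<Longrightarrow> (\<And>a c. lin_form (\<lambda>b. F a b c)) \<Longrightarrow>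
   (\<And>a b. lin_form (\<lambda>c. F a b c)) \<Longrightarrow> trilinear_form F"
  unfolding trilinear_form_def by auto

lemma bilinear_formD1: "bilinear_form F \<Longrightarrow> lin_form (\<lambda>a. F a b)"
  by (simp add: bilinear_form_def)
lemma bilinear_formD2: "bilinear_form F \<Longrightarrow> lin_form (\<lambda>b. F a b)"
  by (simp add: bilinear_form_def)

lemma teq2_bilinear_form:
  "teq2 sc sc xs ys \<Longrightarrow> bilinear_form F \<Longrightarrow> (\<Sum>(a, b)\<leftarrow>xs. F a b) = (\<Sum>(a, b)\<leftarrow>ys. F a b)"
  by (rule teq2_bilinear[OF H_vector_space]) (auto simp: bilinear_form_def)

lemma teq3_trilinear_form:
  "teq3 sc sc sc xs ys \<Longrightarrow> trilinear_form F \<Longrightarrow> (\<Sum>(a, b, c)\<leftarrow>xs. F a b c) = (\<Sum>(a, b, c)\<leftarrow>ys. F a b c)"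
  by (rule teq3_trilinear[OF H_vector_space]) (auto simp: trilinear_form_def)

lemma sweedler_cong: "(\<And>a b. F a b = G a b) \<Longrightarrow> sweedler h F = sweedler h G"
  by (metis ext)

lemma sweedler_cmult: "sweedler h (\<lambda>a b. c * F a b) = c * sweedler h F"
  by (simp add: sweedler_def split_def sum_list_const_mult)

lemma sweedler_plus: "sweedler h (\<lambda>a b. F a b + G a b) = sweedler h F + sweedler h G"
  by (simp add: sweedler_def split_def sum_list_addf)

lemma sweedler_swap:
  "sweedler g (\<lambda>a b. sweedler h (\<lambda>c d. F a b c d)) = sweedler h (\<lambda>c d. sweedler g (\<lambda>a b. F a b c d))"
  unfolding sweedler_def by (simp add: split_def sum_list_swap[of _ "Delta h" "Delta g"])

lemma sweedler_add: "bilinear_form F \<Longrightarrow> sweedler (a + b) F = sweedler a F + sweedler b F"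
  unfolding sweedler_def using teq2_bilinear_form[OF Delta_add] by simp

lemma sweedler_scale:
  assumes "bilinear_form F"
  shows "sweedler (sc r a) F = r * sweedler a F"
proof -
  have "sweedler (sc r a) F = (\<Sum>(x, y)\<leftarrow>[(sc r x, y). (x, y) \<leftarrow> Delta a]. F x y)"
    unfolding sweedler_def using Delta_scale assms by (rule teq2_bilinear_form)
  also have "\<dots> = r * sweedler a F"
    using linear_scale[OF bilinear_formD1[OF assms]]
    by (simp add: sweedler_def split_def comp_def sum_list_const_mult)
  finally show ?thesis .
qed

lemma lin_form_sweedler: "bilinear_form F \<Longrightarrow> lin_form (\<lambda>h. sweedler h F)"
  by (rule lin_formI) (simp_all add: sweedler_add sweedler_scale)

lemma lin_form_sweedler_param:
  assumes "\<And>a b. lin_form (\<lambda>x. F x a b)"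
  shows "lin_form (\<lambda>x. sweedler h (F x))"
proof (rule lin_formI)
  show "sweedler h (F (x + y)) = sweedler h (F x) + sweedler h (F y)" for x y
    unfolding sweedler_def by (simp add: split_def linear_add[OF assms] sum_list_addf)
  show "sweedler h (F (sc c x)) = c * sweedler h (F x)" for c x
    unfolding sweedler_def by (simp add: split_def linear_scale[OF assms] sum_list_const_mult)
qed

lemma sweedler_sum_list:
  "bilinear_form F \<Longrightarrow> sweedler (\<Sum>x\<leftarrow>xs. G x) F = (\<Sum>x\<leftarrow>xs. sweedler (G x) F)"
  using linear_sum_list[OF lin_form_sweedler] by blast

lemma sweedler_one: "bilinear_form F \<Longrightarrow> sweedler one F = F one one"
  unfolding sweedler_def using teq2_bilinear_form[OF Delta_one] by simp

lemma sweedler_coassoc: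
  "trilinear_form F \<Longrightarrow>
   sweedler h (\<lambda>x y. sweedler x (\<lambda>x1 x2. F x1 x2 y)) = sweedler h (\<lambda>x y. sweedler y (\<lambda>y1 y2. F x y1 y2))"
  unfolding sweedler_def using teq3_trilinear_form[OF Delta_coassoc, of F h]
  by (simp add: sum_list_concat_map map_concat comp_def split_def)

lemma sweedler_mult:
  "bilinear_form F \<Longrightarrow>
   sweedler (mult a b) F = sweedler a (\<lambda>a1 a2. sweedler b (\<lambda>b1 b2. F (mult a1 b1) (mult a2 b2)))"
  unfolding sweedler_def using teq2_bilinear_form[OF Delta_mult, of F a b]
  by (simp add: sum_list_concat_map map_concat comp_def split_def)

lemma sweedler_counit_left: "lin_form g \<Longrightarrow> sweedler h (\<lambda>x y. eps x * g y) = g h"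
  using linear_sum_list[of sc "(*)" g "\<lambda>(x, y). sc (eps x) y" "Delta h"] counit_left[of h]
  unfolding sweedler_def by (simp add: split_def linear_scale)

lemma sweedler_counit_right: "lin_form g \<Longrightarrow> sweedler h (\<lambda>x y. eps y * g x) = g h"
  using linear_sum_list[of sc "(*)" g "\<lambda>(x, y). sc (eps y) x" "Delta h"] counit_right[of h]
  unfolding sweedler_def by (simp add: split_def linear_scale)

lemma sweedler_antipode_left: "lin_form g \<Longrightarrow> sweedler h (\<lambda>x y. g (mult (S x) y)) = eps h * g one"
  using linear_sum_list[of sc "(*)" g "\<lambda>(x, y). mult (S x) y" "Delta h"] antipode_left[of h]
  unfolding sweedler_def by (simp add: split_def linear_scale)

lemma sweedler_antipode_right: "lin_form g \<Longrightarrow> sweedler h (\<lambda>x y. g (mult x (S y))) = eps h * g one"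
  using linear_sum_list[of sc "(*)" g "\<lambda>(x, y). mult x (S y)" "Delta h"] antipode_right[of h]
  unfolding sweedler_def by (simp add: split_def linear_scale)

lemmas lin_form_intros = lin_form_sweedler lin_form_sweedler_param lin_form_cmult_left lin_form_cmult_right
  lin_form_comp_mult_right lin_form_comp_mult_left lin_form_comp_S eps_linear bilinear_formI trilinear_formI

section \<open>The antipode\<close>

lemma S_one: "S one = one"
proof (rule H_separate)
  fix \<phi> assume \<phi>: "lin_form \<phi>"
  have "\<phi> one = sweedler one (\<lambda>x y. \<phi> (mult (S x) y))"
    using sweedler_antipode_left[OF \<phi>, of one] by simp
  also have "\<dots> = \<phi> (S one)"
    by (subst sweedler_one) (intro lin_form_intros \<phi>, simp)
  finally show "\<phi> (S one) = \<phi> one" by simp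
qed

lemma eps_S: "eps (S h) = eps h"
proof -
  have "eps h = sweedler h (\<lambda>x y. eps (mult x (S y)))"
    using sweedler_antipode_right[OF eps_linear, of h] by simp
  also have "\<dots> = sweedler h (\<lambda>x y. eps x * eps (S y))"
    by (simp add: eps_mult)
  also have "\<dots> = eps (S h)"
    by (rule sweedler_counit_left) (intro lin_form_intros)
  finally show ?thesis by simp
qed

lemma sweedler_antipode_nested:
  assumes G: "bilinear_form G"
  shows "sweedler h (\<lambda>a b. sweedler a (\<lambda>a1 a2. sweedler b (\<lambda>b1 b2. G (mult a1 (S b2)) (mult a2 (S b1)))))
    = eps h * G one one"
proof -
  note G1 = bilinear_formD1[OF G] and G2 = bilinear_formD2[OF G]
  have "sweedler h (\<lambda>a b. sweedler a (\<lambda>a1 a2. sweedler b (\<lambda>b1 b2. G (mult a1 (S b2)) (mult a2 (S b1)))))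
      = sweedler h (\<lambda>a1 r. sweedler r (\<lambda>a2 b. sweedler b (\<lambda>b1 b2. G (mult a1 (S b2)) (mult a2 (S b1)))))"
    by (rule sweedler_coassoc) (intro lin_form_intros G1 G2)
  also have "\<dots> = sweedler h (\<lambda>a1 r. sweedler r (\<lambda>c b2. sweedler c (\<lambda>a2 b1. G (mult a1 (S b2)) (mult a2 (S b1)))))"
    by (rule sweedler_cong, rule sweedler_coassoc[symmetric]) (intro lin_form_intros G1 G2)
  also have "\<dots> = sweedler h (\<lambda>a1 r. sweedler r (\<lambda>c b2. eps c * G (mult a1 (S b2)) one))"
    by (rule sweedler_cong, rule sweedler_cong, rule sweedler_antipode_right) (intro lin_form_intros G1 G2)
  also have "\<dots> = sweedler h (\<lambda>a1 r. G (mult a1 (S r)) one)"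
    by (rule sweedler_cong, rule sweedler_counit_left) (intro lin_form_intros G1 G2)
  also have "\<dots> = eps h * G one one"
    by (rule sweedler_antipode_right) (intro lin_form_intros G1 G2)
  finally show ?thesis .
qed

text \<open>Anti-comultiplicativity of S:
  \<Delta>(S h) = \<Delta>(S h1) (h2 S(h5) \<otimes> h3 S(h4)) = \<Delta>(S(h1) h2) (S(h4) \<otimes> S(h3)) = S(h2) \<otimes> S(h1).\<close>

lemma sweedler_S_expand:
  assumes F: "bilinear_form F"
  shows "sweedler (S h) F = sweedler h (\<lambda>m b. sweedler m (\<lambda>x a. sweedler a (\<lambda>a1 a2. sweedler b (\<lambda>b1 b2.
    sweedler (S x) (\<lambda>p q. F (mult p (mult a1 (S b2))) (mult q (mult a2 (S b1))))))))"
proof -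
  note F1 = bilinear_formD1[OF F] and F2 = bilinear_formD2[OF F]
  define K where "K x a1 a2 b1 b2 =
    sweedler (S x) (\<lambda>p q. F (mult p (mult a1 (S b2))) (mult q (mult a2 (S b1))))" for x a1 a2 b1 b2
  have "lin_form (\<lambda>z. K z a1 a2 b1 b2)" "lin_form (\<lambda>z. K x z a2 b1 b2)" "lin_form (\<lambda>z. K x a1 z b1 b2)"
    "lin_form (\<lambda>z. K x a1 a2 z b2)" "lin_form (\<lambda>z. K x a1 a2 b1 z)" for x a1 a2 b1 b2
    unfolding K_def by (intro lin_form_intros F1 F2)+
  note K_linear = this
  have "sweedler (S h) F = sweedler h (\<lambda>x y. eps y * sweedler (S x) F)"
    by (rule sweedler_counit_right[symmetric]) (intro lin_form_intros F1 F2)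
  also have "\<dots> = sweedler h (\<lambda>x y. sweedler y (\<lambda>a b. sweedler a (\<lambda>a1 a2. sweedler b (\<lambda>b1 b2. K x a1 a2 b1 b2))))"
  proof (rule sweedler_cong)
    fix x y
    have "bilinear_form (\<lambda>u v. sweedler (S x) (\<lambda>p q. F (mult p u) (mult q v)))"
      by (intro lin_form_intros F1 F2)
    from sweedler_antipode_nested[OF this, of y]
    show "eps y * sweedler (S x) F = sweedler y (\<lambda>a b. sweedler a (\<lambda>a1 a2. sweedler b (\<lambda>b1 b2. K x a1 a2 b1 b2)))"
      unfolding K_def by simp
  qed
  also have "\<dots> = sweedler h (\<lambda>m b. sweedler m (\<lambda>x a. sweedler a (\<lambda>a1 a2. sweedler b (\<lambda>b1 b2. K x a1 a2 b1 b2))))"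
    by (rule sweedler_coassoc[symmetric]) (intro lin_form_intros K_linear)
  finally show ?thesis
    unfolding K_def .
qed

lemma sweedler_S:
  assumes F: "bilinear_form F"
  shows "sweedler (S h) F = sweedler h (\<lambda>a b. F (S b) (S a))"
proof -
  note F1 = bilinear_formD1[OF F] and F2 = bilinear_formD2[OF F]
  have "sweedler m (\<lambda>x a. sweedler a (\<lambda>a1 a2. sweedler b (\<lambda>b1 b2.
          sweedler (S x) (\<lambda>p q. F (mult p (mult a1 (S b2))) (mult q (mult a2 (S b1)))))))
      = eps m * sweedler b (\<lambda>b1 b2. F (S b2) (S b1))" for m b
  proof -
    have "sweedler m (\<lambda>x a. sweedler a (\<lambda>a1 a2. sweedler b (\<lambda>b1 b2.
            sweedler (S x) (\<lambda>p q. F (mult p (mult a1 (S b2))) (mult q (mult a2 (S b1)))))))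
        = sweedler m (\<lambda>x a. sweedler b (\<lambda>b1 b2.
            sweedler (mult (S x) a) (\<lambda>u v. F (mult u (S b2)) (mult v (S b1)))))"
    proof (rule sweedler_cong)
      fix x a
      have "sweedler a (\<lambda>a1 a2. sweedler b (\<lambda>b1 b2.
              sweedler (S x) (\<lambda>p q. F (mult p (mult a1 (S b2))) (mult q (mult a2 (S b1))))))
          = sweedler b (\<lambda>b1 b2. sweedler (S x) (\<lambda>p q.
              sweedler a (\<lambda>a1 a2. F (mult (mult p a1) (S b2)) (mult (mult q a2) (S b1)))))"
        by (simp add: sweedler_swap[of a] mult_assoc)
      also have "\<dots> = sweedler b (\<lambda>b1 b2. sweedler (mult (S x) a) (\<lambda>u v. F (mult u (S b2)) (mult v (S b1))))"
        by (rule sweedler_cong, rule sweedler_mult[symmetric]) (intro lin_form_intros F1 F2)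
      finally show "sweedler a (\<lambda>a1 a2. sweedler b (\<lambda>b1 b2.
              sweedler (S x) (\<lambda>p q. F (mult p (mult a1 (S b2))) (mult q (mult a2 (S b1))))))
          = \<dots>" .
    qed
    also have "\<dots> = sweedler b (\<lambda>b1 b2. sweedler m (\<lambda>x a.
            sweedler (mult (S x) a) (\<lambda>u v. F (mult u (S b2)) (mult v (S b1)))))"
      by (rule sweedler_swap)
    also have "\<dots> = sweedler b (\<lambda>b1 b2. eps m * sweedler one (\<lambda>u v. F (mult u (S b2)) (mult v (S b1))))"
      by (rule sweedler_cong, rule sweedler_antipode_left) (intro lin_form_intros F1 F2)
    also have "\<dots> = eps m * sweedler b (\<lambda>b1 b2. F (S b2) (S b1))"
      unfolding sweedler_cmult[symmetric]
      by (rule sweedler_cong, subst sweedler_one) (intro lin_form_intros F1 F2, simp)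
    finally show ?thesis .
  qed
  then have "sweedler (S h) F = sweedler h (\<lambda>m b. eps m * sweedler b (\<lambda>b1 b2. F (S b2) (S b1)))"
    by (simp add: sweedler_S_expand[OF F])
  also have "\<dots> = sweedler h (\<lambda>b1 b2. F (S b2) (S b1))"
    by (rule sweedler_counit_left) (intro lin_form_intros F1 F2)
  finally show ?thesis .
qed

lemma sweedler_antipode_left_mult:
  assumes \<psi>: "lin_form \<psi>"
  shows "sweedler g (\<lambda>g1 g2. sweedler h (\<lambda>h1 h2. \<psi> (mult (S (mult g1 h1)) (mult g2 h2))))
    = eps g * eps h * \<psi> one"
proof -
  have "sweedler g (\<lambda>g1 g2. sweedler h (\<lambda>h1 h2. \<psi> (mult (S (mult g1 h1)) (mult g2 h2))))
      = sweedler (mult g h) (\<lambda>x y. \<psi> (mult (S x) y))"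
    by (rule sweedler_mult[symmetric]) (intro lin_form_intros \<psi>)
  also have "\<dots> = eps g * eps h * \<psi> one"
    by (simp add: sweedler_antipode_left[OF \<psi>] eps_mult)
  finally show ?thesis .
qed

lemma sweedler_antipode_right_rev:
  assumes \<psi>: "lin_form \<psi>"
  shows "sweedler g (\<lambda>g1 g2. sweedler h (\<lambda>h1 h2. \<psi> (mult (mult g1 h1) (mult (S h2) (S g2)))))
    = eps g * eps h * \<psi> one"
proof -
  have "sweedler g (\<lambda>g1 g2. sweedler h (\<lambda>h1 h2. \<psi> (mult (mult g1 h1) (mult (S h2) (S g2)))))
      = sweedler g (\<lambda>g1 g2. sweedler h (\<lambda>h1 h2. (\<lambda>z. \<psi> (mult g1 (mult z (S g2)))) (mult h1 (S h2))))"
    by (simp add: mult_assoc)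
  also have "\<dots> = sweedler g (\<lambda>g1 g2. eps h * \<psi> (mult g1 (S g2)))"
    by (rule sweedler_cong, subst sweedler_antipode_right) (intro lin_form_intros \<psi>, simp)
  also have "\<dots> = eps h * (eps g * \<psi> one)"
    by (simp add: sweedler_cmult sweedler_antipode_right[OF \<psi>])
  finally show ?thesis by (simp add: algebra_simps)
qed

text \<open>Anti-multiplicativity of S: S(gh) = S(g1 h1) g2 h2 S(h3) S(g3) = S(h) S(g).\<close>

lemma S_mult_expand:
  assumes \<phi>: "lin_form \<phi>"
  shows "\<phi> (S (mult g h)) = sweedler g (\<lambda>g1 g2. sweedler h (\<lambda>h1 h2. sweedler g2 (\<lambda>a b. sweedler h2 (\<lambda>c d.
    \<phi> (mult (S (mult g1 h1)) (mult (mult a c) (mult (S d) (S b))))))))"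
proof -
  have "\<phi> (S (mult g h)) = sweedler g (\<lambda>g1 g2. eps g2 * \<phi> (S (mult g1 h)))"
    by (rule sweedler_counit_right[symmetric]) (intro lin_form_intros \<phi>)
  also have "\<dots> = sweedler g (\<lambda>g1 g2. sweedler h (\<lambda>h1 h2. eps g2 * eps h2 * \<phi> (S (mult g1 h1))))"
  proof (rule sweedler_cong)
    fix g1 g2
    have "\<phi> (S (mult g1 h)) = sweedler h (\<lambda>h1 h2. eps h2 * \<phi> (S (mult g1 h1)))"
      by (rule sweedler_counit_right[symmetric]) (intro lin_form_intros \<phi>)
    then show "eps g2 * \<phi> (S (mult g1 h)) = sweedler h (\<lambda>h1 h2. eps g2 * eps h2 * \<phi> (S (mult g1 h1)))"
      by (simp add: sweedler_cmult mult.assoc)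
  qed
  also have "\<dots> = sweedler g (\<lambda>g1 g2. sweedler h (\<lambda>h1 h2. sweedler g2 (\<lambda>a b. sweedler h2 (\<lambda>c d.
    \<phi> (mult (S (mult g1 h1)) (mult (mult a c) (mult (S d) (S b))))))))"
    using sweedler_antipode_right_rev[OF lin_form_comp_mult_left[OF \<phi>]] by simp
  finally show ?thesis .
qed

lemma S_mult: "S (mult g h) = mult (S h) (S g)"
proof (rule H_separate)
  fix \<phi> assume \<phi>: "lin_form \<phi>"
  define X where "X g1 a b h1 c d = \<phi> (mult (S (mult g1 h1)) (mult (mult a c) (mult (S d) (S b))))"
    for g1 a b h1 c d
  have "lin_form (\<lambda>z. X z a b h1 c d)" "lin_form (\<lambda>z. X g1 z b h1 c d)" "lin_form (\<lambda>z. X g1 a z h1 c d)"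
    "lin_form (\<lambda>z. X g1 a b z c d)" "lin_form (\<lambda>z. X g1 a b h1 z d)" "lin_form (\<lambda>z. X g1 a b h1 c z)"
    for g1 a b h1 c d
    unfolding X_def by (intro lin_form_intros \<phi>)+
  note X_linear = this
  have "\<phi> (S (mult g h))
      = sweedler g (\<lambda>g1 g2. sweedler h (\<lambda>h1 h2. sweedler g2 (\<lambda>a b. sweedler h2 (\<lambda>c d. X g1 a b h1 c d))))"
    unfolding X_def by (rule S_mult_expand[OF \<phi>])
  also have "\<dots> = sweedler g (\<lambda>g1 g2. sweedler g2 (\<lambda>a b. sweedler h (\<lambda>h1 h2. sweedler h2 (\<lambda>c d. X g1 a b h1 c d))))"
    by (rule sweedler_cong, rule sweedler_swap)
  also have "\<dots> = sweedler g (\<lambda>g' b. sweedler g' (\<lambda>g1 a. sweedler h (\<lambda>h1 h2. sweedler h2 (\<lambda>c d. X g1 a b h1 c d))))"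
    by (rule sweedler_coassoc[symmetric]) (intro lin_form_intros X_linear)
  also have "\<dots> = sweedler g (\<lambda>g' b. sweedler g' (\<lambda>g1 a. sweedler h (\<lambda>h' d. sweedler h' (\<lambda>h1 c. X g1 a b h1 c d))))"
    by (rule sweedler_cong, rule sweedler_cong, rule sweedler_coassoc[symmetric]) (intro lin_form_intros X_linear)
  also have "\<dots> = sweedler g (\<lambda>g' b. sweedler h (\<lambda>h' d. sweedler g' (\<lambda>g1 a. sweedler h' (\<lambda>h1 c. X g1 a b h1 c d))))"
    by (rule sweedler_cong, rule sweedler_swap)
  also have "\<dots> = sweedler g (\<lambda>g' b. sweedler h (\<lambda>h' d. eps h' * (eps g' * \<phi> (mult (S d) (S b)))))"
  proof (rule sweedler_cong, rule sweedler_cong)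
    fix g' b h' d
    have "sweedler g' (\<lambda>g1 a. sweedler h' (\<lambda>h1 c.
        (\<lambda>z. \<phi> (mult z (mult (S d) (S b)))) (mult (S (mult g1 h1)) (mult a c))))
        = eps g' * eps h' * \<phi> (mult one (mult (S d) (S b)))"
      by (rule sweedler_antipode_left_mult) (intro lin_form_intros \<phi>)
    then show "sweedler g' (\<lambda>g1 a. sweedler h' (\<lambda>h1 c. X g1 a b h1 c d))
        = eps h' * (eps g' * \<phi> (mult (S d) (S b)))"
      unfolding X_def by (simp add: mult_assoc mult.commute mult.left_commute)
  qed
  also have "\<dots> = sweedler g (\<lambda>g' b. eps g' * \<phi> (mult (S h) (S b)))"
    by (rule sweedler_cong, rule sweedler_counit_left) (intro lin_form_intros \<phi>)
  also have "\<dots> = \<phi> (mult (S h) (S g))"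
    by (rule sweedler_counit_left) (intro lin_form_intros \<phi>)
  finally show "\<phi> (S (mult g h)) = \<phi> (mult (S h) (S g))" .
qed

section \<open>The regular crossed modules\<close>

lemma teq2I:
  "(\<And>f g. lin_form f \<Longrightarrow> lin_form g \<Longrightarrow> (\<Sum>(a, b)\<leftarrow>xs. f a * g b) = (\<Sum>(a, b)\<leftarrow>ys. f a * g b))
   \<Longrightarrow> teq2 sc sc xs ys"
  unfolding teq2_def by blast

lemma teq3I:
  "(\<And>f g k. lin_form f \<Longrightarrow> lin_form g \<Longrightarrow> lin_form k \<Longrightarrow>
     (\<Sum>(a, b, c)\<leftarrow>xs. f a * g b * k c) = (\<Sum>(a, b, c)\<leftarrow>ys. f a * g b * k c))
   \<Longrightarrow> teq3 sc sc sc xs ys"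
  unfolding teq3_def by blast

lemma Delta_scale_right: "teq2 sc sc (Delta (sc r v)) [(x, sc r w). (x, w) \<leftarrow> Delta v]"
proof (rule teq2I)
  fix f g assume f: "lin_form f" and g: "lin_form g"
  have "(\<Sum>(a, b)\<leftarrow>Delta (sc r v). f a * g b) = r * sweedler v (\<lambda>a b. f a * g b)"
    unfolding sweedler_def[symmetric] by (rule sweedler_scale) (intro lin_form_intros f g)
  also have "\<dots> = (\<Sum>(a, b)\<leftarrow>[(x, sc r w). (x, w) \<leftarrow> Delta v]. f a * g b)"
    by (simp add: sweedler_def split_def comp_def linear_scale[OF g] sum_list_const_mult[symmetric]
        algebra_simps)
  finally show "(\<Sum>(a, b)\<leftarrow>Delta (sc r v). f a * g b) = \<dots>" .
qed

lemma Delta_comodule: "left_comodule sc Delta eps sc Delta"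
  unfolding left_comodule_def
  using H_vector_space Delta_add Delta_scale_right Delta_coassoc counit_left by blast

lemma mult_module: "left_module sc mult one sc mult"
  unfolding left_module_def
  using H_vector_space mult_add_left mult_add_right mult_scale_left mult_scale_right mult_assoc by auto

definition ad :: "'h \<Rightarrow> 'h \<Rightarrow> 'h" where
  "ad h x = (\<Sum>(a, b)\<leftarrow>Delta h. mult (mult a x) (S b))"

lemma lin_form_ad: "lin_form \<phi> \<Longrightarrow> \<phi> (ad h x) = sweedler h (\<lambda>a b. \<phi> (mult (mult a x) (S b)))"
  unfolding ad_def sweedler_def by (simp add: linear_sum_list split_def)

lemma ad_add_right: "ad h (v + w) = ad h v + ad h w"
proof (rule H_separate)
  fix \<phi> assume \<phi>: "lin_form \<phi>"
  show "\<phi> (ad h (v + w)) = \<phi> (ad h v + ad h w)"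
    by (simp add: lin_form_ad[OF \<phi>] linear_add[OF \<phi>] mult_add_left mult_add_right sweedler_plus)
qed

lemma ad_add_left: "ad (h + g) v = ad h v + ad g v"
proof (rule H_separate)
  fix \<phi> assume \<phi>: "lin_form \<phi>"
  show "\<phi> (ad (h + g) v) = \<phi> (ad h v + ad g v)"
    by (simp only: lin_form_ad[OF \<phi>] linear_add[OF \<phi>], rule sweedler_add, intro lin_form_intros \<phi>)
qed

lemma ad_scale_left: "ad (sc r h) v = sc r (ad h v)"
proof (rule H_separate)
  fix \<phi> assume \<phi>: "lin_form \<phi>"
  show "\<phi> (ad (sc r h) v) = \<phi> (sc r (ad h v))"
    by (simp only: lin_form_ad[OF \<phi>] linear_scale[OF \<phi>], rule sweedler_scale, intro lin_form_intros \<phi>)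
qed

lemma ad_scale_right: "ad h (sc r v) = sc r (ad h v)"
proof (rule H_separate)
  fix \<phi> assume \<phi>: "lin_form \<phi>"
  show "\<phi> (ad h (sc r v)) = \<phi> (sc r (ad h v))"
    by (simp only: lin_form_ad[OF \<phi>] linear_scale[OF \<phi>] mult_scale_left mult_scale_right sweedler_cmult)
qed

lemma ad_one: "ad one v = v"
proof (rule H_separate)
  fix \<phi> assume \<phi>: "lin_form \<phi>"
  show "\<phi> (ad one v) = \<phi> v"
    by (simp add: lin_form_ad[OF \<phi>], subst sweedler_one) (intro lin_form_intros \<phi>, simp add: S_one)
qed

lemma ad_mult: "ad (mult g h) v = ad g (ad h v)"
proof (rule H_separate)
  fix \<phi> assume \<phi>: "lin_form \<phi>"
  have "\<phi> (ad (mult g h) v)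
      = sweedler g (\<lambda>g1 g2. sweedler h (\<lambda>h1 h2. \<phi> (mult (mult (mult g1 h1) v) (S (mult g2 h2)))))"
    unfolding lin_form_ad[OF \<phi>]
    by (rule sweedler_mult[where F = "\<lambda>a b. \<phi> (mult (mult a v) (S b))", simplified]) (intro lin_form_intros \<phi>)
  also have "\<dots> = sweedler g (\<lambda>g1 g2. sweedler h (\<lambda>h1 h2.
      (\<lambda>z. \<phi> (mult (mult g1 z) (S g2))) (mult (mult h1 v) (S h2))))"
    by (simp add: S_mult mult_assoc)
  also have "\<dots> = sweedler g (\<lambda>g1 g2. \<phi> (mult (mult g1 (ad h v)) (S g2)))"
    by (rule sweedler_cong, rule lin_form_ad[symmetric]) (intro lin_form_intros \<phi>)
  also have "\<dots> = \<phi> (ad g (ad h v))"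
    by (simp only: lin_form_ad[OF \<phi>])
  finally show "\<phi> (ad (mult g h) v) = \<phi> (ad g (ad h v))" .
qed

lemma ad_module: "left_module sc mult one sc ad"
  unfolding left_module_def
  using H_vector_space ad_add_right ad_add_left ad_scale_left ad_scale_right ad_one ad_mult by blast

lemma sweedler_ad:
  assumes G: "bilinear_form G"
  shows "sweedler (ad h v) G = sweedler h (\<lambda>a b. sweedler a (\<lambda>a1 a2. sweedler v (\<lambda>v1 v2. sweedler b (\<lambda>b1 b2.
    G (mult (mult a1 v1) (S b2)) (mult (mult a2 v2) (S b1))))))"
proof -
  note G1 = bilinear_formD1[OF G] and G2 = bilinear_formD2[OF G]
  have "sweedler (ad h v) G = sweedler h (\<lambda>a b. sweedler (mult (mult a v) (S b)) G)"
    unfolding ad_def by (subst sweedler_sum_list[OF G]) (simp add: sweedler_def split_def)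
  also have "\<dots> = sweedler h (\<lambda>a b. sweedler (mult a v) (\<lambda>p q. sweedler (S b) (\<lambda>s1 s2. G (mult p s1) (mult q s2))))"
    by (rule sweedler_cong, rule sweedler_mult) (rule G)
  also have "\<dots> = sweedler h (\<lambda>a b. sweedler a (\<lambda>a1 a2. sweedler v (\<lambda>v1 v2.
      sweedler (S b) (\<lambda>s1 s2. G (mult (mult a1 v1) s1) (mult (mult a2 v2) s2)))))"
    by (rule sweedler_cong, rule sweedler_mult[where F = "\<lambda>p q. sweedler (S b) (\<lambda>s1 s2. G (mult p s1) (mult q s2))"
        for b, simplified]) (intro lin_form_intros G1 G2)
  also have "\<dots> = sweedler h (\<lambda>a b. sweedler a (\<lambda>a1 a2. sweedler v (\<lambda>v1 v2. sweedler b (\<lambda>b1 b2.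
      G (mult (mult a1 v1) (S b2)) (mult (mult a2 v2) (S b1))))))"
    by (rule sweedler_cong, rule sweedler_cong, rule sweedler_cong, rule sweedler_S) (intro lin_form_intros G1 G2)
  finally show ?thesis .
qed

lemma sweedler_ad_mult_right_expand:
  assumes f: "lin_form f" and g: "lin_form g"
  shows "sweedler h (\<lambda>h1 h2. sweedler (ad h1 v) (\<lambda>z w. f (mult z h2) * g w))
    = sweedler h (\<lambda>a r. sweedler r (\<lambda>b1 t. sweedler t (\<lambda>b2 h2. sweedler a (\<lambda>a1 a2. sweedler v (\<lambda>v1 v2.
        f (mult (mult (mult a1 v1) (S b2)) h2) * g (mult (mult a2 v2) (S b1)))))))"
proof -
  define Z where "Z a1 a2 v1 v2 b1 b2 h2 =
    f (mult (mult (mult a1 v1) (S b2)) h2) * g (mult (mult a2 v2) (S b1))" for a1 a2 v1 v2 b1 b2 h2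
  have "lin_form (\<lambda>z. Z z a2 v1 v2 b1 b2 h2)" "lin_form (\<lambda>z. Z a1 z v1 v2 b1 b2 h2)"
    "lin_form (\<lambda>z. Z a1 a2 z v2 b1 b2 h2)" "lin_form (\<lambda>z. Z a1 a2 v1 z b1 b2 h2)"
    "lin_form (\<lambda>z. Z a1 a2 v1 v2 z b2 h2)" "lin_form (\<lambda>z. Z a1 a2 v1 v2 b1 z h2)"
    "lin_form (\<lambda>z. Z a1 a2 v1 v2 b1 b2 z)" for a1 a2 v1 v2 b1 b2 h2
    unfolding Z_def by (intro lin_form_intros f g)+
  note Z_linear = this
  have "sweedler h (\<lambda>h1 h2. sweedler (ad h1 v) (\<lambda>z w. f (mult z h2) * g w))
      = sweedler h (\<lambda>h1 h2. sweedler h1 (\<lambda>a b. sweedler a (\<lambda>a1 a2. sweedler v (\<lambda>v1 v2.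
          sweedler b (\<lambda>b1 b2. Z a1 a2 v1 v2 b1 b2 h2)))))"
    unfolding Z_def by (rule sweedler_cong, rule sweedler_ad) (intro lin_form_intros f g)
  also have "\<dots> = sweedler h (\<lambda>a r. sweedler r (\<lambda>b h2. sweedler a (\<lambda>a1 a2. sweedler v (\<lambda>v1 v2.
      sweedler b (\<lambda>b1 b2. Z a1 a2 v1 v2 b1 b2 h2)))))"
    by (rule sweedler_coassoc) (intro lin_form_intros Z_linear)
  also have "\<dots> = sweedler h (\<lambda>a r. sweedler r (\<lambda>b h2. sweedler b (\<lambda>b1 b2. sweedler a (\<lambda>a1 a2.
      sweedler v (\<lambda>v1 v2. Z a1 a2 v1 v2 b1 b2 h2)))))"
  proof (rule sweedler_cong, rule sweedler_cong)
    fix a r b h2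
    show "sweedler a (\<lambda>a1 a2. sweedler v (\<lambda>v1 v2. sweedler b (\<lambda>b1 b2. Z a1 a2 v1 v2 b1 b2 h2)))
      = sweedler b (\<lambda>b1 b2. sweedler a (\<lambda>a1 a2. sweedler v (\<lambda>v1 v2. Z a1 a2 v1 v2 b1 b2 h2)))"
      by (simp only: sweedler_swap[of v b] sweedler_swap[of a b])
  qed
  also have "\<dots> = sweedler h (\<lambda>a r. sweedler r (\<lambda>b1 t. sweedler t (\<lambda>b2 h2. sweedler a (\<lambda>a1 a2.
      sweedler v (\<lambda>v1 v2. Z a1 a2 v1 v2 b1 b2 h2)))))"
    by (rule sweedler_cong, rule sweedler_coassoc) (intro lin_form_intros Z_linear)
  finally show ?thesis
    unfolding Z_def .
qed

lemma sweedler_ad_mult_right: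
  assumes f: "lin_form f" and g: "lin_form g"
  shows "sweedler h (\<lambda>h1 h2. sweedler (ad h1 v) (\<lambda>z w. f (mult z h2) * g w))
    = sweedler h (\<lambda>c b. sweedler c (\<lambda>a1 a2. sweedler v (\<lambda>v1 v2. f (mult a1 v1) * g (mult (mult a2 v2) (S b)))))"
proof -
  have "sweedler t (\<lambda>b2 h2. f (mult (mult (mult a1 v1) (S b2)) h2) * g (mult (mult a2 v2) (S b1)))
      = eps t * (f (mult a1 v1) * g (mult (mult a2 v2) (S b1)))" for t a1 a2 v1 v2 b1
  proof -
    have "lin_form (\<lambda>z. f (mult (mult a1 v1) z) * g (mult (mult a2 v2) (S b1)))"
      by (intro lin_form_intros f)
    from sweedler_antipode_left[OF this, of t] show ?thesis
      by (simp add: mult_assoc)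
  qed
  note antipode = this
  have "sweedler h (\<lambda>h1 h2. sweedler (ad h1 v) (\<lambda>z w. f (mult z h2) * g w))
      = sweedler h (\<lambda>a r. sweedler r (\<lambda>b1 t. eps t * sweedler a (\<lambda>a1 a2.
          sweedler v (\<lambda>v1 v2. f (mult a1 v1) * g (mult (mult a2 v2) (S b1))))))"
    unfolding sweedler_ad_mult_right_expand[OF f g]
  proof (rule sweedler_cong, rule sweedler_cong)
    fix a r b1 t
    show "sweedler t (\<lambda>b2 h2. sweedler a (\<lambda>a1 a2. sweedler v (\<lambda>v1 v2.
        f (mult (mult (mult a1 v1) (S b2)) h2) * g (mult (mult a2 v2) (S b1)))))
      = eps t * sweedler a (\<lambda>a1 a2. sweedler v (\<lambda>v1 v2. f (mult a1 v1) * g (mult (mult a2 v2) (S b1))))"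
      by (simp only: sweedler_swap[of t] antipode sweedler_cmult)
  qed
  also have "\<dots> = sweedler h (\<lambda>c b. sweedler c (\<lambda>a1 a2. sweedler v (\<lambda>v1 v2.
      f (mult a1 v1) * g (mult (mult a2 v2) (S b)))))"
    by (rule sweedler_cong, rule sweedler_counit_right) (intro lin_form_intros f g)
  finally show ?thesis .
qed

lemma ad_yd:
  "teq2 sc sc [(mult h1 x, ad h2 y). (h1, h2) \<leftarrow> Delta h, (x, y) \<leftarrow> Delta v]
              [(mult z h2, w). (h1, h2) \<leftarrow> Delta h, (z, w) \<leftarrow> Delta (ad h1 v)]"
proof (rule teq2I)
  fix f g assume f: "lin_form f" and g: "lin_form g"
  have "(\<Sum>(a, b)\<leftarrow>[(mult h1 x, ad h2 y). (h1, h2) \<leftarrow> Delta h, (x, y) \<leftarrow> Delta v]. f a * g b)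
      = sweedler h (\<lambda>h1 h2. sweedler v (\<lambda>x y. f (mult h1 x) * g (ad h2 y)))"
    unfolding sweedler_def by (simp add: sum_list_concat_map map_concat split_def comp_def)
  also have "\<dots> = sweedler h (\<lambda>h1 h2. sweedler v (\<lambda>x y. f (mult h1 x) * sweedler h2 (\<lambda>a b. g (mult (mult a y) (S b)))))"
    by (simp only: lin_form_ad[OF g])
  also have "\<dots> = sweedler h (\<lambda>h1 h2. sweedler h2 (\<lambda>a b. sweedler v (\<lambda>x y. f (mult h1 x) * g (mult (mult a y) (S b)))))"
    by (simp only: sweedler_cmult[symmetric], rule sweedler_cong, rule sweedler_swap)
  also have "\<dots> = sweedler h (\<lambda>c b. sweedler c (\<lambda>a1 a2. sweedler v (\<lambda>v1 v2.
      f (mult a1 v1) * g (mult (mult a2 v2) (S b)))))"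
    by (rule sweedler_coassoc[symmetric]) (intro lin_form_intros f g)
  also have "\<dots> = sweedler h (\<lambda>h1 h2. sweedler (ad h1 v) (\<lambda>z w. f (mult z h2) * g w))"
    by (rule sweedler_ad_mult_right[OF f g, symmetric])
  also have "\<dots> = (\<Sum>(a, b)\<leftarrow>[(mult z h2, w). (h1, h2) \<leftarrow> Delta h, (z, w) \<leftarrow> Delta (ad h1 v)]. f a * g b)"
    unfolding sweedler_def by (simp add: sum_list_concat_map map_concat split_def comp_def)
  finally show "(\<Sum>(a, b)\<leftarrow>[(mult h1 x, ad h2 y). (h1, h2) \<leftarrow> Delta h, (x, y) \<leftarrow> Delta v]. f a * g b) = \<dots>" .
qed

lemma ad_crossed_module: "crossed_module sc mult one Delta eps sc ad Delta"
  unfolding crossed_module_def using ad_module Delta_comodule ad_yd by blast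

definition coad :: "'h \<Rightarrow> ('h \<times> 'h) list" where
  "coad x = [(mult a (S c), b). (y, c) \<leftarrow> Delta x, (a, b) \<leftarrow> Delta y]"

lemma coad_sum: "(\<Sum>(p, q)\<leftarrow>coad x. G p q) = sweedler x (\<lambda>y c. sweedler y (\<lambda>a b. G (mult a (S c)) b))"
  unfolding coad_def sweedler_def by (simp add: sum_list_concat_map map_concat split_def comp_def)

lemma coad_add: "teq2 sc sc (coad (v + w)) (coad v @ coad w)"
proof (rule teq2I)
  fix f g assume f: "lin_form f" and g: "lin_form g"
  show "(\<Sum>(a, b)\<leftarrow>coad (v + w). f a * g b) = (\<Sum>(a, b)\<leftarrow>coad v @ coad w. f a * g b)"
    by (simp only: coad_sum map_append sum_list_append, rule sweedler_add) (intro lin_form_intros f g)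
qed

lemma coad_scale: "teq2 sc sc (coad (sc r v)) [(x, sc r w). (x, w) \<leftarrow> coad v]"
proof (rule teq2I)
  fix f g assume f: "lin_form f" and g: "lin_form g"
  have "(\<Sum>(a, b)\<leftarrow>coad (sc r v). f a * g b) = r * (\<Sum>(a, b)\<leftarrow>coad v. f a * g b)"
    by (simp only: coad_sum, rule sweedler_scale) (intro lin_form_intros f g)
  also have "\<dots> = (\<Sum>(a, b)\<leftarrow>[(x, sc r w). (x, w) \<leftarrow> coad v]. f a * g b)"
    by (simp add: split_def comp_def linear_scale[OF g] sum_list_const_mult[symmetric] algebra_simps)
  finally show "(\<Sum>(a, b)\<leftarrow>coad (sc r v). f a * g b) = \<dots>" .
qed

lemma coad_Delta_sum:
  assumes f: "lin_form f" and g: "lin_form g" and k: "lin_form k"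
  shows "(\<Sum>(a, b, c)\<leftarrow>[(h1, h2, w). (h, w) \<leftarrow> coad v, (h1, h2) \<leftarrow> Delta h]. f a * g b * k c)
    = sweedler v (\<lambda>x1 r1. sweedler r1 (\<lambda>x2 r2. sweedler r2 (\<lambda>x3 r3. sweedler r3 (\<lambda>x4 x5.
        f (mult x1 (S x5)) * g (mult x2 (S x4)) * k x3))))"
proof -
  define \<Phi> where "\<Phi> x1 x2 x3 x4 x5 = f (mult x1 (S x5)) * g (mult x2 (S x4)) * k x3" for x1 x2 x3 x4 x5
  have "lin_form (\<lambda>z. \<Phi> z x2 x3 x4 x5)" "lin_form (\<lambda>z. \<Phi> x1 z x3 x4 x5)" "lin_form (\<lambda>z. \<Phi> x1 x2 z x4 x5)"
    "lin_form (\<lambda>z. \<Phi> x1 x2 x3 z x5)" "lin_form (\<lambda>z. \<Phi> x1 x2 x3 x4 z)" for x1 x2 x3 x4 x5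
    unfolding \<Phi>_def by (intro lin_form_intros f g k)+
  note \<Phi>_linear = this
  have "(\<Sum>(a, b, c)\<leftarrow>[(h1, h2, w). (h, w) \<leftarrow> coad v, (h1, h2) \<leftarrow> Delta h]. f a * g b * k c)
      = (\<Sum>(h, w)\<leftarrow>coad v. sweedler h (\<lambda>h1 h2. f h1 * g h2 * k w))"
    unfolding sweedler_def by (simp add: sum_list_concat_map map_concat split_def comp_def)
  also have "\<dots> = sweedler v (\<lambda>y c. sweedler y (\<lambda>a b. sweedler (mult a (S c)) (\<lambda>h1 h2. f h1 * g h2 * k b)))"
    by (rule coad_sum)
  also have "\<dots> = sweedler v (\<lambda>y c. sweedler y (\<lambda>a b. sweedler a (\<lambda>a1 a2. sweedler c (\<lambda>c1 c2. \<Phi> a1 a2 b c1 c2))))"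
    unfolding \<Phi>_def
    by (intro sweedler_cong, subst sweedler_mult, intro lin_form_intros f g k, rule sweedler_cong, rule sweedler_S)
      (intro lin_form_intros f g k)
  also have "\<dots> = sweedler v (\<lambda>a r. sweedler r (\<lambda>b c. sweedler a (\<lambda>a1 a2. sweedler c (\<lambda>c1 c2. \<Phi> a1 a2 b c1 c2))))"
    by (rule sweedler_coassoc) (intro lin_form_intros \<Phi>_linear)
  also have "\<dots> = sweedler v (\<lambda>a r. sweedler a (\<lambda>a1 a2. sweedler r (\<lambda>b c. sweedler c (\<lambda>c1 c2. \<Phi> a1 a2 b c1 c2))))"
    by (rule sweedler_cong, rule sweedler_swap)
  also have "\<dots> = sweedler v (\<lambda>x1 r1. sweedler r1 (\<lambda>x2 r2. sweedler r2 (\<lambda>x3 r3. sweedler r3 (\<lambda>x4 x5.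
      \<Phi> x1 x2 x3 x4 x5))))"
    by (rule sweedler_coassoc) (intro lin_form_intros \<Phi>_linear)
  finally show ?thesis
    unfolding \<Phi>_def .
qed

lemma coad_coad_sum:
  assumes f: "lin_form f" and g: "lin_form g" and k: "lin_form k"
  shows "(\<Sum>(a, b, c)\<leftarrow>[(h, h', w'). (h, w) \<leftarrow> coad v, (h', w') \<leftarrow> coad w]. f a * g b * k c)
    = sweedler v (\<lambda>x1 r1. sweedler r1 (\<lambda>x2 r2. sweedler r2 (\<lambda>x3 r3. sweedler r3 (\<lambda>x4 x5.
        f (mult x1 (S x5)) * g (mult x2 (S x4)) * k x3))))"
proof -
  define \<Phi> where "\<Phi> x1 x2 x3 x4 x5 = f (mult x1 (S x5)) * g (mult x2 (S x4)) * k x3" for x1 x2 x3 x4 x5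
  have "lin_form (\<lambda>z. \<Phi> z x2 x3 x4 x5)" "lin_form (\<lambda>z. \<Phi> x1 z x3 x4 x5)" "lin_form (\<lambda>z. \<Phi> x1 x2 z x4 x5)"
    "lin_form (\<lambda>z. \<Phi> x1 x2 x3 z x5)" "lin_form (\<lambda>z. \<Phi> x1 x2 x3 x4 z)" for x1 x2 x3 x4 x5
    unfolding \<Phi>_def by (intro lin_form_intros f g k)+
  note \<Phi>_linear = this
  have "(\<Sum>(a, b, c)\<leftarrow>[(h, h', w'). (h, w) \<leftarrow> coad v, (h', w') \<leftarrow> coad w]. f a * g b * k c)
      = (\<Sum>(h, w)\<leftarrow>coad v. \<Sum>(h', w')\<leftarrow>coad w. f h * g h' * k w')"
    by (simp add: sum_list_concat_map map_concat split_def comp_def)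
  also have "\<dots> = sweedler v (\<lambda>y c. sweedler y (\<lambda>a b. sweedler b (\<lambda>y' c'. sweedler y' (\<lambda>a' b'. \<Phi> a a' b' c' c))))"
    unfolding \<Phi>_def by (simp only: coad_sum)
  also have "\<dots> = sweedler v (\<lambda>a r. sweedler r (\<lambda>b c. sweedler b (\<lambda>y' c'. sweedler y' (\<lambda>a' b'. \<Phi> a a' b' c' c))))"
    by (rule sweedler_coassoc) (intro lin_form_intros \<Phi>_linear)
  also have "\<dots> = sweedler v (\<lambda>a r. sweedler r (\<lambda>y' r2. sweedler r2 (\<lambda>c' c. sweedler y' (\<lambda>a' b'. \<Phi> a a' b' c' c))))"
    by (rule sweedler_cong, rule sweedler_coassoc) (intro lin_form_intros \<Phi>_linear)
  also have "\<dots> = sweedler v (\<lambda>a r. sweedler r (\<lambda>y' r2. sweedler y' (\<lambda>a' b'. sweedler r2 (\<lambda>c' c. \<Phi> a a' b' c' c))))"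
    by (rule sweedler_cong, rule sweedler_cong, rule sweedler_swap)
  also have "\<dots> = sweedler v (\<lambda>x1 r1. sweedler r1 (\<lambda>x2 r2. sweedler r2 (\<lambda>x3 r3. sweedler r3 (\<lambda>x4 x5.
      \<Phi> x1 x2 x3 x4 x5))))"
    by (rule sweedler_cong, rule sweedler_coassoc) (intro lin_form_intros \<Phi>_linear)
  finally show ?thesis
    unfolding \<Phi>_def .
qed

lemma coad_coassoc:
  "teq3 sc sc sc [(h1, h2, w). (h, w) \<leftarrow> coad v, (h1, h2) \<leftarrow> Delta h]
                 [(h, h', w'). (h, w) \<leftarrow> coad v, (h', w') \<leftarrow> coad w]"
  by (rule teq3I) (simp only: coad_Delta_sum coad_coad_sum)

lemma coad_counit: "(\<Sum>(h, w)\<leftarrow>coad v. sc (eps h) w) = v"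
proof (rule H_separate)
  fix \<phi> assume \<phi>: "lin_form \<phi>"
  have "\<phi> (\<Sum>(h, w)\<leftarrow>coad v. sc (eps h) w) = (\<Sum>(h, w)\<leftarrow>coad v. eps h * \<phi> w)"
    by (simp add: linear_sum_list[OF \<phi>] split_def comp_def linear_scale[OF \<phi>])
  also have "\<dots> = sweedler v (\<lambda>y c. sweedler y (\<lambda>a b. eps c * (eps a * \<phi> b)))"
    by (simp only: coad_sum eps_mult eps_S mult.commute mult.left_commute)
  also have "\<dots> = \<phi> v"
    by (simp only: sweedler_cmult sweedler_counit_left[OF \<phi>] sweedler_counit_right[OF \<phi>])
  finally show "\<phi> (\<Sum>(h, w)\<leftarrow>coad v. sc (eps h) w) = \<phi> v" .
qed

lemma coad_comodule: "left_comodule sc Delta eps sc coad"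
  unfolding left_comodule_def using H_vector_space coad_add coad_scale coad_coassoc coad_counit by blast

lemma sweedler_coad_mult_right:
  assumes f: "lin_form f" and g: "lin_form g"
  shows "sweedler h (\<lambda>h1 h2. sweedler (mult h1 v) (\<lambda>y c. sweedler y (\<lambda>a b. f (mult (mult a (S c)) h2) * g b)))
    = sweedler h (\<lambda>p r. eps r * sweedler v (\<lambda>y c. sweedler p (\<lambda>p1 p2. sweedler y (\<lambda>a b.
        f (mult (mult p1 a) (S c)) * g (mult p2 b)))))"
proof -
  define \<Theta> where "\<Theta> p1 p2 a b c q h2 = f (mult (mult (mult p1 a) (S (mult q c))) h2) * g (mult p2 b)"
    for p1 p2 a b c q h2
  have "lin_form (\<lambda>z. \<Theta> z p2 a b c q h2)" "lin_form (\<lambda>z. \<Theta> p1 z a b c q h2)"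
    "lin_form (\<lambda>z. \<Theta> p1 p2 z b c q h2)" "lin_form (\<lambda>z. \<Theta> p1 p2 a z c q h2)"
    "lin_form (\<lambda>z. \<Theta> p1 p2 a b z q h2)" "lin_form (\<lambda>z. \<Theta> p1 p2 a b c z h2)"
    "lin_form (\<lambda>z. \<Theta> p1 p2 a b c q z)" for p1 p2 a b c q h2
    unfolding \<Theta>_def by (intro lin_form_intros f g)+
  note \<Theta>_linear = this
  have "sweedler h (\<lambda>h1 h2. sweedler (mult h1 v) (\<lambda>y c. sweedler y (\<lambda>a b. f (mult (mult a (S c)) h2) * g b)))
      = sweedler h (\<lambda>h1 h2. sweedler h1 (\<lambda>p q. sweedler v (\<lambda>y c. sweedler p (\<lambda>p1 p2.
          sweedler y (\<lambda>a b. \<Theta> p1 p2 a b c q h2)))))"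
    unfolding \<Theta>_def
    by (intro sweedler_cong, subst sweedler_mult, intro lin_form_intros f g, rule sweedler_cong, rule sweedler_cong,
        rule sweedler_mult) (intro lin_form_intros f g)
  also have "\<dots> = sweedler h (\<lambda>p r. sweedler r (\<lambda>q h2. sweedler v (\<lambda>y c. sweedler p (\<lambda>p1 p2.
      sweedler y (\<lambda>a b. \<Theta> p1 p2 a b c q h2)))))"
    by (rule sweedler_coassoc) (intro lin_form_intros \<Theta>_linear)
  also have "\<dots> = sweedler h (\<lambda>p r. sweedler v (\<lambda>y c. sweedler p (\<lambda>p1 p2. sweedler y (\<lambda>a b.
      sweedler r (\<lambda>q h2. \<Theta> p1 p2 a b c q h2)))))"
    by (rule sweedler_cong, subst sweedler_swap, rule sweedler_cong, subst sweedler_swap, rule sweedler_cong,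
        rule sweedler_swap)
  also have "\<dots> = sweedler h (\<lambda>p r. eps r * sweedler v (\<lambda>y c. sweedler p (\<lambda>p1 p2. sweedler y (\<lambda>a b.
      f (mult (mult p1 a) (S c)) * g (mult p2 b)))))"
  proof (intro sweedler_cong, unfold sweedler_cmult[symmetric], intro sweedler_cong)
    fix r y c p1 p2 a b
    have "lin_form (\<lambda>z. f (mult (mult (mult p1 a) (S c)) z) * g (mult p2 b))"
      by (intro lin_form_intros f g)
    from sweedler_antipode_left[OF this, of r]
    show "sweedler r (\<lambda>q h2. \<Theta> p1 p2 a b c q h2) = eps r * (f (mult (mult p1 a) (S c)) * g (mult p2 b))"
      unfolding \<Theta>_def by (simp add: mult_assoc S_mult)
  qed
  finally show ?thesis .
qed

lemma coad_yd:
  "teq2 sc sc [(mult h1 x, mult h2 y). (h1, h2) \<leftarrow> Delta h, (x, y) \<leftarrow> coad v]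
              [(mult z h2, w). (h1, h2) \<leftarrow> Delta h, (z, w) \<leftarrow> coad (mult h1 v)]"
proof (rule teq2I)
  fix f g assume f: "lin_form f" and g: "lin_form g"
  have "(\<Sum>(a, b)\<leftarrow>[(mult h1 x, mult h2 y). (h1, h2) \<leftarrow> Delta h, (x, y) \<leftarrow> coad v]. f a * g b)
      = sweedler h (\<lambda>h1 h2. \<Sum>(x, y)\<leftarrow>coad v. f (mult h1 x) * g (mult h2 y))"
    unfolding sweedler_def by (simp add: sum_list_concat_map map_concat split_def comp_def)
  also have "\<dots> = sweedler h (\<lambda>h1 h2. sweedler v (\<lambda>y c. sweedler y (\<lambda>a b.
      f (mult h1 (mult a (S c))) * g (mult h2 b))))"
    by (simp only: coad_sum)
  also have "\<dots> = sweedler h (\<lambda>p r. eps r * sweedler v (\<lambda>y c. sweedler p (\<lambda>p1 p2. sweedler y (\<lambda>a b.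
      f (mult (mult p1 a) (S c)) * g (mult p2 b)))))"
    by (subst sweedler_counit_right) (intro lin_form_intros f g, simp add: sweedler_swap[of h] mult_assoc)
  also have "\<dots> = sweedler h (\<lambda>h1 h2. sweedler (mult h1 v) (\<lambda>y c. sweedler y (\<lambda>a b. f (mult (mult a (S c)) h2) * g b)))"
    by (rule sweedler_coad_mult_right[OF f g, symmetric])
  also have "\<dots> = sweedler h (\<lambda>h1 h2. \<Sum>(z, w)\<leftarrow>coad (mult h1 v). f (mult z h2) * g w)"
    by (simp only: coad_sum)
  also have "\<dots> = (\<Sum>(a, b)\<leftarrow>[(mult z h2, w). (h1, h2) \<leftarrow> Delta h, (z, w) \<leftarrow> coad (mult h1 v)]. f a * g b)"
    unfolding sweedler_def by (simp add: sum_list_concat_map map_concat split_def comp_def)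
  finally show "(\<Sum>(a, b)\<leftarrow>[(mult h1 x, mult h2 y). (h1, h2) \<leftarrow> Delta h, (x, y) \<leftarrow> coad v]. f a * g b) = \<dots>" .
qed

lemma coad_crossed_module: "crossed_module sc mult one Delta eps sc mult coad"
  unfolding crossed_module_def using mult_module coad_comodule coad_yd by blast

lemma eps_ad: "eps (ad a h) = eps a * eps h"
proof -
  have "eps (ad a h) = sweedler a (\<lambda>x y. eps y * (eps x * eps h))"
    by (simp add: lin_form_ad[OF eps_linear] eps_mult eps_S mult_ac)
  also have "\<dots> = eps a * eps h"
    by (rule sweedler_counit_right) (intro lin_form_intros)
  finally show ?thesis .
qed

section \<open>Normalisation of R\<close>

definition eps_id :: "('h \<times> 'h) list \<Rightarrow> 'h" where
  "eps_id X = (\<Sum>(a, b)\<leftarrow>X. sc (eps a) b)"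

lemma lin_form_eps_id: "lin_form g \<Longrightarrow> g (eps_id X) = (\<Sum>(a, b)\<leftarrow>X. eps a * g b)"
  unfolding eps_id_def by (simp add: linear_sum_list split_def linear_scale)

lemma eps_id_teq2: "teq2 sc sc X Y \<Longrightarrow> eps_id X = eps_id Y"
  by (rule H_separate) (simp add: lin_form_eps_id teq2_def eps_linear)

lemma eps_id_mult:
  "eps_id [(mult a c, mult b d). (a, b) \<leftarrow> X, (c, d) \<leftarrow> Y] = mult (eps_id X) (eps_id Y)"
proof (rule H_separate)
  fix g assume g: "lin_form g"
  have "g (mult (eps_id X) (eps_id Y)) = (\<Sum>(a, b)\<leftarrow>X. eps a * g (mult b (eps_id Y)))"
    by (rule lin_form_eps_id) (intro lin_form_intros g)
  also have "\<dots> = (\<Sum>(a, b)\<leftarrow>X. \<Sum>(c, d)\<leftarrow>Y. eps (mult a c) * g (mult b d))"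
    using lin_form_eps_id[OF lin_form_comp_mult_left[OF g]]
    by (simp add: eps_mult sum_list_const_mult mult.assoc split_def)
  finally show "g (eps_id [(mult a c, mult b d). (a, b) \<leftarrow> X, (c, d) \<leftarrow> Y]) = g (mult (eps_id X) (eps_id Y))"
    by (simp add: lin_form_eps_id[OF g] sum_list_concat_map map_concat split_def comp_def)
qed

text \<open>u = (eps \<otimes> id) R is idempotent by (\<Delta> \<otimes> id) R = R13 R23 and invertible since R is,
  hence u = 1.\<close>

lemma eps_id_idempotent:
  assumes "teq3 sc sc sc [(x1, x2, y). (x, y) \<leftarrow> R, (x1, x2) \<leftarrow> Delta x] [(a, c, mult b d). (a, b) \<leftarrow> R, (c, d) \<leftarrow> R]"
  shows "mult (eps_id R) (eps_id R) = eps_id R"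
proof (rule H_separate)
  fix g assume g: "lin_form g"
  have "(\<Sum>(a, b, c)\<leftarrow>[(x1, x2, y). (x, y) \<leftarrow> R, (x1, x2) \<leftarrow> Delta x]. eps a * eps b * g c)
      = (\<Sum>(a, b, c)\<leftarrow>[(a, c, mult b d). (a, b) \<leftarrow> R, (c, d) \<leftarrow> R]. eps a * eps b * g c)"
    using assms g eps_linear unfolding teq3_def by blast
  moreover have "sweedler x (\<lambda>x1 x2. eps x1 * (eps x2 * c)) = eps x * c" for x c
    by (rule sweedler_counit_left) (intro lin_form_intros)
  ultimately show "g (mult (eps_id R) (eps_id R)) = g (eps_id R)"
    unfolding eps_id_mult[symmetric] lin_form_eps_id[OF g]
    by (simp add: sweedler_def sum_list_concat_map map_concat split_def comp_def eps_mult mult.assoc)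
qed

lemma quasitriangular_eps_id:
  assumes "quasitriangular sc mult one Delta eps S R"
  shows "eps_id R = one"
proof -
  obtain Rinv where "teq2 sc sc [(mult a c, mult b d). (a, b) \<leftarrow> R, (c, d) \<leftarrow> Rinv] [(one, one)]"
    using assms unfolding quasitriangular_def by blast
  then have "mult (eps_id R) (eps_id Rinv) = eps_id [(one, one)]"
    unfolding eps_id_mult[symmetric] by (rule eps_id_teq2)
  also have "\<dots> = one"
    using H_vector_space by (simp add: eps_id_def vector_space_def)
  finally have inverse: "mult (eps_id R) (eps_id Rinv) = one" .
  have idem: "mult (eps_id R) (eps_id R) = eps_id R"
    using assms unfolding quasitriangular_def by (blast intro: eps_id_idempotent)
  have "eps_id R = mult (eps_id R) (mult (eps_id R) (eps_id Rinv))"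
    by (simp add: inverse)
  also have "\<dots> = mult (mult (eps_id R) (eps_id R)) (eps_id Rinv)"
    by (simp only: mult_assoc)
  also have "\<dots> = one"
    by (simp only: idem inverse)
  finally show ?thesis .
qed

lemma convolution_idempotent_eq_eps:
  assumes \<phi>: "lin_form \<phi>" and \<psi>: "lin_form \<psi>"
    and idem: "\<And>h. \<phi> h = sweedler h (\<lambda>a b. \<phi> a * \<phi> b)"
    and inverse: "\<And>h. sweedler h (\<lambda>a b. \<phi> a * \<psi> b) = eps h"
  shows "\<phi> h = eps h"
proof -
  have "\<phi> h = sweedler h (\<lambda>a b. eps b * \<phi> a)"
    by (rule sweedler_counit_right[symmetric]) (rule \<phi>)
  also have "\<dots> = sweedler h (\<lambda>a b. sweedler b (\<lambda>b1 b2. \<phi> a * \<phi> b1 * \<psi> b2))"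
    by (simp only: inverse[symmetric] sweedler_cmult[symmetric] mult.commute mult.left_commute)
  also have "\<dots> = sweedler h (\<lambda>a' b2. sweedler a' (\<lambda>a b1. \<phi> a * \<phi> b1 * \<psi> b2))"
    by (rule sweedler_coassoc[symmetric]) (intro lin_form_intros \<phi> \<psi>)
  also have "\<dots> = sweedler h (\<lambda>a' b2. \<phi> a' * \<psi> b2)"
  proof (rule sweedler_cong)
    fix a' b2
    have "sweedler a' (\<lambda>a b1. \<phi> a * \<phi> b1 * \<psi> b2) = sweedler a' (\<lambda>a b1. \<psi> b2 * (\<phi> a * \<phi> b1))"
      by (simp only: mult_ac)
    also have "\<dots> = \<psi> b2 * \<phi> a'"
      by (simp only: sweedler_cmult idem[symmetric])
    finally show "sweedler a' (\<lambda>a b1. \<phi> a * \<phi> b1 * \<psi> b2) = \<phi> a' * \<psi> b2"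
      by (simp only: mult.commute)
  qed
  also have "\<dots> = eps h"
    by (rule inverse)
  finally show ?thesis .
qed

lemma dual_quasitriangular_one_left:
  assumes "dual_quasitriangular sc mult one Delta eps S R"
  shows "R one h = eps h"
proof -
  have R1: "\<And>g. lin_form (\<lambda>h. R h g)" and R2: "\<And>h. lin_form (R h)"
    and R_mult: "\<And>h g f. R (mult h g) f = (\<Sum>(f1, f2)\<leftarrow>Delta f. R h f1 * R g f2)"
    using assms unfolding dual_quasitriangular_def by blast+
  obtain Rinv where "(\<forall>g. lin_form (\<lambda>h. Rinv h g)) \<and> (\<forall>h. lin_form (Rinv h))
      \<and> (\<forall>h g. sum_list [R h1 g1 * Rinv h2 g2. (h1, h2) \<leftarrow> Delta h, (g1, g2) \<leftarrow> Delta g] = eps h * eps g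
             \<and> sum_list [Rinv h1 g1 * R h2 g2. (h1, h2) \<leftarrow> Delta h, (g1, g2) \<leftarrow> Delta g] = eps h * eps g)"
    using assms unfolding dual_quasitriangular_def by blast
  then have I1: "\<And>g. lin_form (\<lambda>h. Rinv h g)" and I2: "\<And>h. lin_form (Rinv h)"
    and inverse: "\<And>h g. sum_list [R h1 g1 * Rinv h2 g2. (h1, h2) \<leftarrow> Delta h, (g1, g2) \<leftarrow> Delta g] = eps h * eps g"
    by blast+
  show ?thesis
  proof (rule convolution_idempotent_eq_eps[OF R2 I2])
    show "R one f = sweedler f (\<lambda>f1 f2. R one f1 * R one f2)" for f
      using R_mult[of one one f] by (simp add: sweedler_def split_def)
    show "sweedler g (\<lambda>g1 g2. R one g1 * Rinv one g2) = eps g" for g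
    proof -
      have "eps g = sweedler one (\<lambda>h1 h2. sweedler g (\<lambda>g1 g2. R h1 g1 * Rinv h2 g2))"
        using inverse[where h = one and g = g] by (simp add: sweedler_def split_def sum_list_concat_map map_concat comp_def)
      also have "\<dots> = sweedler g (\<lambda>g1 g2. R one g1 * Rinv one g2)"
        by (rule sweedler_one) (intro lin_form_intros R1 R2 I1 I2)
      finally show ?thesis by simp
    qed
  qed
qed

end

section \<open>Transport to V\<close>

locale hopf_embedding = hopf sc mult one Delta eps S
  for sc :: "'k::field \<Rightarrow> 'h::ab_group_add \<Rightarrow> 'h" and mult one Delta eps S +
  fixes sv :: "'k \<Rightarrow> 'v::ab_group_add \<Rightarrow> 'v" and j :: "'h \<Rightarrow> 'v" and p :: "'v \<Rightarrow> 'h"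
  assumes j_linear: "Vector_Spaces.linear sc sv j" and p_linear: "Vector_Spaces.linear sv sc p"
    and p_j [simp]: "p (j x) = x"
begin

sublocale j: Vector_Spaces.linear sc sv j by (rule j_linear)
sublocale p: Vector_Spaces.linear sv sc p by (rule p_linear)

lemma V_vector_space: "vector_space sv"
  using p_linear by (simp add: linear_iff)

abbreviation lin_form_V :: "('v \<Rightarrow> 'k) \<Rightarrow> bool" where
  "lin_form_V g \<equiv> Vector_Spaces.linear sv (*) g"

lemma lin_form_comp_j: "lin_form_V g \<Longrightarrow> lin_form (\<lambda>x. g (j x))"
  by (rule lin_formI) (simp_all add: j.add j.scale linear_add linear_scale)

definition kernel_part :: "'v \<Rightarrow> 'v" where
  "kernel_part v = v - j (p v)"

lemma p_kernel_part [simp]: "p (kernel_part v) = 0"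
  by (simp add: kernel_part_def p.diff)

lemma kernel_part_j [simp]: "kernel_part (j x) = 0"
  by (simp add: kernel_part_def)

lemma kernel_part_idem [simp]: "kernel_part (kernel_part v) = kernel_part v"
  by (simp add: kernel_part_def[of "kernel_part v"])

lemma kernel_part_add: "kernel_part (v + w) = kernel_part v + kernel_part w"
  by (simp add: kernel_part_def p.add j.add algebra_simps)

lemma kernel_part_scale: "kernel_part (sv r v) = sv r (kernel_part v)"
  by (simp add: kernel_part_def p.scale j.scale j.vs2.scale_right_diff_distrib)

lemma j_p_plus_kernel_part: "j (p v) + kernel_part v = v"
  by (simp add: kernel_part_def)

definition ext_action :: "('h \<Rightarrow> 'h \<Rightarrow> 'h) \<Rightarrow> 'h \<Rightarrow> 'v \<Rightarrow> 'v" where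
  "ext_action act h v = j (act h (p v)) + sv (eps h) (kernel_part v)"

definition ext_coaction :: "('h \<Rightarrow> ('h \<times> 'h) list) \<Rightarrow> 'v \<Rightarrow> ('h \<times> 'v) list" where
  "ext_coaction co v = [(x, j y). (x, y) \<leftarrow> co (p v)] @ [(one, kernel_part v)]"

lemma ext_coaction_sum:
  "(\<Sum>(a, b)\<leftarrow>ext_coaction co v. F a b) = (\<Sum>(x, y)\<leftarrow>co (p v). F x (j y)) + F one (kernel_part v)"
  unfolding ext_coaction_def by (simp add: split_def comp_def)

lemma p_ext_action: "p (ext_action act h v) = act h (p v)"
  by (simp add: ext_action_def p.add p.scale)

lemma kernel_part_ext_action: "kernel_part (ext_action act h v) = sv (eps h) (kernel_part v)"
  by (simp add: ext_action_def kernel_part_add kernel_part_scale)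

lemma ext_action_j: "ext_action act h (j y) = j (act h y)"
  by (simp add: ext_action_def)

lemma ext_module:
  assumes "left_module sc mult one sc act"
  shows "left_module sc mult one sv (ext_action act)"
proof -
  have add_right: "act h (v + w) = act h v + act h w"
    and add_left: "act (h + g) v = act h v + act g v"
    and scale_left: "act (sc r h) v = sc r (act h v)" and scale_right: "act h (sc r v) = sc r (act h v)"
    and act_one: "act one v = v" and act_mult: "act (mult g h) v = act g (act h v)" for h g v w r
    using assms unfolding left_module_def by blast+
  have eps_add: "eps (x + y) = eps x + eps y" and eps_scale: "eps (sc r x) = r * eps x" for x y r
    by (simp_all add: linear_add[OF eps_linear] linear_scale[OF eps_linear])
  show ?thesis
    unfolding left_module_def
  proof (intro conjI allI)
    show "vector_space sv" by (rule V_vector_space)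
    show "ext_action act h (v + w) = ext_action act h v + ext_action act h w" for h v w
      by (simp add: ext_action_def p.add kernel_part_add add_right j.add j.vs2.scale_right_distrib algebra_simps)
    show "ext_action act (h + g) v = ext_action act h v + ext_action act g v" for h g v
      by (simp add: ext_action_def add_left j.add eps_add j.vs2.scale_left_distrib algebra_simps)
    show "ext_action act (sc r h) v = sv r (ext_action act h v)" for r h v
      by (simp add: ext_action_def scale_left j.scale eps_scale j.vs2.scale_right_distrib)
    show "ext_action act h (sv r v) = sv r (ext_action act h v)" for r h v
      by (simp add: ext_action_def p.scale scale_right j.scale kernel_part_scale j.vs2.scale_right_distrib
          j.vs2.scale_left_commute)
    show "ext_action act one v = v" for v
      by (simp add: ext_action_def act_one j_p_plus_kernel_part)
    show "ext_action act (mult g h) v = ext_action act g (ext_action act h v)" for g h v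
      by (simp add: ext_action_def[of act g] p_ext_action kernel_part_ext_action,
          simp add: ext_action_def act_mult eps_mult)
  qed
qed

lemma ext_coaction_coassoc:
  assumes "left_comodule sc Delta eps sc co"
  shows "teq3 sc sc sv [(h1, h2, w). (h, w) \<leftarrow> ext_coaction co v, (h1, h2) \<leftarrow> Delta h]
                       [(h, h', w'). (h, w) \<leftarrow> ext_coaction co v, (h', w') \<leftarrow> ext_coaction co w]"
  unfolding teq3_def
proof (intro allI impI)
  fix f g k assume f: "lin_form f" and g: "lin_form g" and k: "lin_form_V k"
  have kj: "lin_form (\<lambda>x. k (j x))" by (rule lin_form_comp_j[OF k])
  have co_add: "teq2 sc sc (co (v + w)) (co v @ co w)"
    and co_coassoc: "teq3 sc sc sc [(h1, h2, w). (h, w) \<leftarrow> co v, (h1, h2) \<leftarrow> Delta h]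
                                   [(h, h', w'). (h, w) \<leftarrow> co v, (h', w') \<leftarrow> co w]" for v w
    using assms unfolding left_comodule_def by blast+
  have "(\<Sum>(x, y)\<leftarrow>co 0. g x * k (j y))
      = (\<Sum>(x, y)\<leftarrow>co 0. g x * k (j y)) + (\<Sum>(x, y)\<leftarrow>co 0. g x * k (j y))"
    using co_add[of 0 0, unfolded teq2_def, rule_format, OF g kj] by simp
  then have co_zero: "(\<Sum>(x, y)\<leftarrow>co 0. g x * k (j y)) = 0"
    by (simp only: add_cancel_right_right)
  have "(\<Sum>(x, y)\<leftarrow>co (p v). sweedler x (\<lambda>h1 h2. f h1 * g h2 * k (j y)))
      = (\<Sum>(x, y)\<leftarrow>co (p v). f x * (\<Sum>(x', y')\<leftarrow>co y. g x' * k (j y')))"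
    using co_coassoc[of "p v", unfolded teq3_def, rule_format, OF f g kj]
    by (simp add: sweedler_def sum_list_concat_map map_concat split_def comp_def sum_list_const_mult mult.assoc)
  moreover have "sweedler one (\<lambda>h1 h2. f h1 * g h2 * k (kernel_part v)) = f one * (g one * k (kernel_part v))"
    by (subst sweedler_one) (intro lin_form_intros f g, simp add: mult.assoc)
  ultimately show "(\<Sum>(a, b, c)\<leftarrow>[(h1, h2, w). (h, w) \<leftarrow> ext_coaction co v, (h1, h2) \<leftarrow> Delta h]. f a * g b * k c)
      = (\<Sum>(a, b, c)\<leftarrow>[(h, h', w'). (h, w) \<leftarrow> ext_coaction co v, (h', w') \<leftarrow> ext_coaction co w]. f a * g b * k c)"
    using co_zero unfolding ext_coaction_def
    by (simp add: sweedler_def sum_list_concat_map map_concat split_def comp_def linear_zero[OF k]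
        sum_list_const_mult algebra_simps)
qed

lemma ext_comodule:
  assumes "left_comodule sc Delta eps sc co"
  shows "left_comodule sc Delta eps sv (ext_coaction co)"
proof -
  have co_add: "teq2 sc sc (co (v + w)) (co v @ co w)"
    and co_scale: "teq2 sc sc (co (sc r v)) [(x, sc r w). (x, w) \<leftarrow> co v]"
    and co_counit: "(\<Sum>(h, w)\<leftarrow>co v. sc (eps h) w) = v" for v w r
    using assms unfolding left_comodule_def by blast+
  show ?thesis
    unfolding left_comodule_def
  proof (intro conjI allI)
    show "vector_space sv" by (rule V_vector_space)
    show "teq2 sc sv (ext_coaction co (v + w)) (ext_coaction co v @ ext_coaction co w)" for v w
      unfolding teq2_def
    proof (intro allI impI)
      fix f g assume f: "lin_form f" and g: "lin_form_V g"
      show "(\<Sum>(a, b)\<leftarrow>ext_coaction co (v + w). f a * g b)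
          = (\<Sum>(a, b)\<leftarrow>ext_coaction co v @ ext_coaction co w. f a * g b)"
        using co_add[of "p v" "p w"] f lin_form_comp_j[OF g]
        by (simp add: teq2_def ext_coaction_sum p.add kernel_part_add linear_add[OF g] algebra_simps)
    qed
    show "teq2 sc sv (ext_coaction co (sv r v)) [(x, sv r w). (x, w) \<leftarrow> ext_coaction co v]" for r v
      unfolding teq2_def
    proof (intro allI impI)
      fix f g assume f: "lin_form f" and g: "lin_form_V g"
      show "(\<Sum>(a, b)\<leftarrow>ext_coaction co (sv r v). f a * g b)
          = (\<Sum>(a, b)\<leftarrow>[(x, sv r w). (x, w) \<leftarrow> ext_coaction co v]. f a * g b)"
        using co_scale[of r "p v", unfolded teq2_def, rule_format, OF f lin_form_comp_j[OF g]]
        by (simp add: ext_coaction_def split_def comp_def p.scale kernel_part_scale j.scale)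
    qed
    show "teq3 sc sc sv [(h1, h2, w). (h, w) \<leftarrow> ext_coaction co v, (h1, h2) \<leftarrow> Delta h]
                        [(h, h', w'). (h, w) \<leftarrow> ext_coaction co v, (h', w') \<leftarrow> ext_coaction co w]" for v
      by (rule ext_coaction_coassoc[OF assms])
    show "(\<Sum>(h, w)\<leftarrow>ext_coaction co v. sv (eps h) w) = v" for v
    proof -
      have "(\<Sum>(h, w)\<leftarrow>co (p v). sv (eps h) (j w)) = j (p v)"
        using arg_cong[where f = j, OF co_counit[of "p v"]]
        by (simp add: linear_sum_list[OF j_linear] j.scale split_def comp_def)
      then show ?thesis
        by (simp add: ext_coaction_def split_def comp_def j_p_plus_kernel_part)
    qed
  qed
qed

lemma ext_yd:
  assumes "crossed_module sc mult one Delta eps sc act co"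
  shows "teq2 sc sv [(mult h1 x, ext_action act h2 y). (h1, h2) \<leftarrow> Delta h, (x, y) \<leftarrow> ext_coaction co v]
                    [(mult z h2, w). (h1, h2) \<leftarrow> Delta h, (z, w) \<leftarrow> ext_coaction co (ext_action act h1 v)]"
  unfolding teq2_def
proof (intro allI impI)
  fix f g assume f: "lin_form f" and g: "lin_form_V g"
  have yd: "teq2 sc sc [(mult h1 x, act h2 y). (h1, h2) \<leftarrow> Delta h, (x, y) \<leftarrow> co v]
                       [(mult z h2, w). (h1, h2) \<leftarrow> Delta h, (z, w) \<leftarrow> co (act h1 v)]" for h v
    using assms unfolding crossed_module_def by blast
  have "act h 0 = 0" for h
    using assms unfolding crossed_module_def left_module_def by (metis add_cancel_right_right)
  then have act_kernel_part: "ext_action act h (kernel_part v) = sv (eps h) (kernel_part v)" for h v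
    by (simp add: ext_action_def)
  have lhs: "(\<Sum>(a, b)\<leftarrow>[(mult h1 x, ext_action act h2 y). (h1, h2) \<leftarrow> Delta h, (x, y) \<leftarrow> ext_coaction co v]. f a * g b)
      = sweedler h (\<lambda>h1 h2. \<Sum>(x, y)\<leftarrow>co (p v). f (mult h1 x) * g (j (act h2 y)))
        + sweedler h (\<lambda>h1 h2. eps h2 * (f h1 * g (kernel_part v)))"
    unfolding sweedler_plus[symmetric] unfolding ext_coaction_def sweedler_def
    by (simp add: sum_list_concat_map map_concat split_def comp_def ext_action_j act_kernel_part
        linear_scale[OF g] algebra_simps)
  have rhs: "(\<Sum>(a, b)\<leftarrow>[(mult z h2, w). (h1, h2) \<leftarrow> Delta h, (z, w) \<leftarrow> ext_coaction co (ext_action act h1 v)]. f a * g b)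
      = sweedler h (\<lambda>h1 h2. \<Sum>(z, w)\<leftarrow>co (act h1 (p v)). f (mult z h2) * g (j w))
        + sweedler h (\<lambda>h1 h2. eps h1 * (f h2 * g (kernel_part v)))"
    unfolding sweedler_plus[symmetric] unfolding ext_coaction_def sweedler_def
    by (simp add: sum_list_concat_map map_concat split_def comp_def p_ext_action kernel_part_ext_action
        linear_scale[OF g] algebra_simps)
  have "sweedler h (\<lambda>h1 h2. \<Sum>(x, y)\<leftarrow>co (p v). f (mult h1 x) * g (j (act h2 y)))
      = sweedler h (\<lambda>h1 h2. \<Sum>(z, w)\<leftarrow>co (act h1 (p v)). f (mult z h2) * g (j w))"
    using yd[where h = h and v = "p v", unfolded teq2_def, rule_format, OF f lin_form_comp_j[OF g]]
    by (simp add: sweedler_def sum_list_concat_map map_concat split_def comp_def)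
  moreover have "sweedler h (\<lambda>h1 h2. eps h2 * (f h1 * g (kernel_part v))) = f h * g (kernel_part v)"
    by (rule sweedler_counit_right) (intro lin_form_intros f)
  moreover have "sweedler h (\<lambda>h1 h2. eps h1 * (f h2 * g (kernel_part v))) = f h * g (kernel_part v)"
    by (rule sweedler_counit_left) (intro lin_form_intros f)
  ultimately show
    "(\<Sum>(a, b)\<leftarrow>[(mult h1 x, ext_action act h2 y). (h1, h2) \<leftarrow> Delta h, (x, y) \<leftarrow> ext_coaction co v]. f a * g b)
     = (\<Sum>(a, b)\<leftarrow>[(mult z h2, w). (h1, h2) \<leftarrow> Delta h, (z, w) \<leftarrow> ext_coaction co (ext_action act h1 v)]. f a * g b)"
    unfolding lhs rhs by simp
qed

lemma ext_crossed_module: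
  assumes "crossed_module sc mult one Delta eps sc act co"
  shows "crossed_module sc mult one Delta eps sv (ext_action act) (ext_coaction co)"
  using assms ext_module ext_comodule ext_yd unfolding crossed_module_def by blast

section \<open>Crossed modules outside the image of the functors\<close>

lemma R_coaction_ext_ad_trivial:
  assumes Q: "quasitriangular sc mult one Delta eps S R"
    and eq: "crossed_obj_eq sc sv (act, R_coaction R act) (ext_action ad, ext_coaction Delta)"
  shows "h = sc (eps h) one"
proof (rule H_separate)
  fix f assume f: "lin_form f"
  have act: "act = ext_action ad" and coact: "teq2 sc sv (R_coaction R act v) (ext_coaction Delta v)" for v
    using eq unfolding crossed_obj_eq_def by auto
  have "lin_form_V (\<lambda>v. eps (p v))"
    by (rule linear_functionalI[OF V_vector_space]) (simp_all add: p.add p.scale linear_add[OF eps_linear]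
        linear_scale[OF eps_linear])
  then have "(\<Sum>(a, b)\<leftarrow>R_coaction R act (j h). f a * eps (p b))
      = (\<Sum>(a, b)\<leftarrow>ext_coaction Delta (j h). f a * eps (p b))"
    using coact f unfolding teq2_def by blast
  moreover have "(\<Sum>(a, b)\<leftarrow>R_coaction R act (j h). f a * eps (p b)) = eps h * f (eps_id R)"
    unfolding R_coaction_def act
    by (simp add: lin_form_eps_id[OF f] split_def comp_def ext_action_j eps_ad sum_list_const_mult mult_ac)
  moreover have "(\<Sum>(a, b)\<leftarrow>ext_coaction Delta (j h). f a * eps (p b)) = f h"
    using sweedler_counit_right[OF f, of h] unfolding ext_coaction_sum
    by (simp add: linear_zero[OF eps_linear] sweedler_def split_def mult_ac)
  ultimately show "f h = f (sc (eps h) one)"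
    by (simp add: quasitriangular_eps_id[OF Q] linear_scale[OF f])
qed

lemma R_action_ext_coad_trivial:
  assumes Q: "dual_quasitriangular sc mult one Delta eps S R"
    and eq: "crossed_obj_eq sc sv (R_action sv R coact, coact) (ext_action mult, ext_coaction coad)"
  shows "h = sc (eps h) one"
proof -
  have act: "R_action sv R coact = ext_action mult"
    and coact: "teq2 sc sv (coact v) (ext_coaction coad v)" for v
    using eq unfolding crossed_obj_eq_def by auto
  have R1: "\<And>g. lin_form (\<lambda>h. R h g)" and R2: "\<And>h. lin_form (R h)"
    using Q unfolding dual_quasitriangular_def by blast+
  have "g (j h) = g (j (sc (eps h) one))" if g: "lin_form_V g" for g
  proof -
    have "g (j h) = g (R_action sv R coact h (j one))"
      by (simp add: act ext_action_j)
    also have "\<dots> = (\<Sum>(a, b)\<leftarrow>coact (j one). R a h * g b)"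
      unfolding R_action_def by (simp add: linear_sum_list[OF g] linear_scale[OF g] split_def comp_def)
    also have "\<dots> = (\<Sum>(a, b)\<leftarrow>ext_coaction coad (j one). R a h * g b)"
      using coact g R1[of h] unfolding teq2_def by blast
    also have "\<dots> = sweedler one (\<lambda>y c. sweedler y (\<lambda>a b. R (mult a (S c)) h * g (j b)))"
      unfolding ext_coaction_sum by (simp add: linear_zero[OF g] coad_sum)
    also have "\<dots> = sweedler one (\<lambda>a b. R (mult a (S one)) h * g (j b))"
      by (rule sweedler_one) (intro lin_form_intros R1 lin_form_comp_j[OF g])
    also have "\<dots> = R one h * g (j one)"
      by (subst sweedler_one) (intro lin_form_intros R1 lin_form_comp_j[OF g], simp add: S_one)
    also have "\<dots> = g (j (sc (eps h) one))"
      by (simp add: dual_quasitriangular_one_left[OF Q] j.scale linear_scale[OF g])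
    finally show ?thesis .
  qed
  then have "j h = j (sc (eps h) one)"
    by (rule vector_space.linear_functionals_separate[OF V_vector_space])
  then show ?thesis
    by (metis p_j)
qed

end

lemma hopf_embedding_exists:
  assumes "hopf_algebra sc mult one Delta eps S" and "vector_space sv"
    and "Vector_Spaces.linear sc sv j" and "inj j"
  obtains p where "hopf_embedding sc mult one Delta eps S sv j p"
proof -
  have "vector_space_pair sc sv"
    using assms(2,3) by (simp add: vector_space_pair_def linear_iff)
  then obtain p where "Vector_Spaces.linear sv sc p" "p \<circ> j = id"
    using vector_space_pair.linear_injective_left_inverse assms(3,4) by blast
  then show ?thesis
    using assms(1,3) that[of p] by (simp add: hopf_embedding_def hopf_embedding_axioms_def hopf_def pointfree_idE)
qed

theorem proposition4p1:
  fixes sc :: "'k::field \<Rightarrow> 'h::ab_group_add \<Rightarrow> 'h"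
    and mult :: "'h \<Rightarrow> 'h \<Rightarrow> 'h" and one :: 'h
    and Delta :: "'h \<Rightarrow> ('h \<times> 'h) list" and eps :: "'h \<Rightarrow> 'k" and S :: "'h \<Rightarrow> 'h"
    and sv :: "'k \<Rightarrow> 'v::ab_group_add \<Rightarrow> 'v"
    and R :: "('h \<times> 'h) list" and Rd :: "'h \<Rightarrow> 'h \<Rightarrow> 'k"
  assumes "hopf_nontrivial sc one"
    and "vector_space sv"
    and "\<exists>j. Vector_Spaces.linear sc sv j \<and> inj j"
  shows "(quasitriangular sc mult one Delta eps S R \<longrightarrow>
            \<not> functor_i_iso sc mult one Delta eps R sv)
       \<and> (dual_quasitriangular sc mult one Delta eps S Rd \<longrightarrow>
            \<not> functor_ii_iso sc mult one Delta eps Rd sv)"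
proof -
  obtain j where j: "Vector_Spaces.linear sc sv j" "inj j"
    using assms(3) by blast
  obtain h where h: "\<And>c. h \<noteq> sc c one"
    using assms(1) unfolding hopf_nontrivial_def by blast
  show ?thesis
  proof (intro conjI impI notI)
    assume Q: "quasitriangular sc mult one Delta eps S R" and F: "functor_i_iso sc mult one Delta eps R sv"
    obtain p where "hopf_embedding sc mult one Delta eps S sv j p"
      using Q assms(2) j by (auto simp: quasitriangular_def elim: hopf_embedding_exists)
    then interpret hopf_embedding sc mult one Delta eps S sv j p .
    obtain act where "crossed_obj_eq sc sv (act, R_coaction R act) (ext_action ad, ext_coaction Delta)"
      using F ext_crossed_module[OF ad_crossed_module]
      unfolding functor_i_iso_def id_on_morphisms_functor_iso_def by fastforce
    with Q h show False
      using R_coaction_ext_ad_trivial by blast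
  next
    assume Q: "dual_quasitriangular sc mult one Delta eps S Rd" and F: "functor_ii_iso sc mult one Delta eps Rd sv"
    obtain p where "hopf_embedding sc mult one Delta eps S sv j p"
      using Q assms(2) j by (auto simp: dual_quasitriangular_def elim: hopf_embedding_exists)
    then interpret hopf_embedding sc mult one Delta eps S sv j p .
    obtain coact where "crossed_obj_eq sc sv (R_action sv Rd coact, coact) (ext_action mult, ext_coaction coad)"
      using F ext_crossed_module[OF coad_crossed_module]
      unfolding functor_ii_iso_def id_on_morphisms_functor_iso_def by fastforce
    with Q h show False
      using R_action_ext_coad_trivial by blast
  qed
qed

end
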